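(* Let $\phi,\psi$ be Drinfeld modules over $K$ with $r=\operatorname{rk}\phi-\operatorname{rk}\psi>0$, and put $n=\operatorname{rk}\phi$. Equip $K\{\tau\}_{<n}=\{\sum_{i=0}^{n-1}c_i\tau^i\}$ with the $\mathbb F_q[t]$-module structure transported from $\operatorname{Ext}^1_\tau(\phi,\psi)$ via the bijection $w\mapsto[\delta]$, $\delta(t)=w$, and let $K\{\tau\}_{\langle1,n)}=\{\sum_{i=1}^{n-1}c_i\tau^i\mid c_i\in K\}$. Then: (i) there is an isomorphism of $\mathbb F_q[t]$-modules $\operatorname{Ext}^1_{0,\tau}(\phi,\psi)\cong K\{\tau\}_{\langle1,n)}$; (ii) $K\{\tau\}_{\langle1,n)}$ is an $\mathbb F_q[t]$-submodule of $K\{\tau\}_{<n}$; (iii) $\operatorname{Ext}^1_{0,\tau}(\phi,\psi)$ is an $\mathbb F_q[t]$-submodule of $\operatorname{Ext}^1_\tau(\phi,\psi)$; (iv) $\operatorname{Ext}^1_{0,\tau}(\phi,\psi)$ has a natural structure of a $\mathbf t$-module (i.e. there is a $\mathbf t$-module $\Pi^0:\mathbb F_q[t]\to\mathrm{Mat}_{n-1}(K\{\tau\})$ whose Mordell–Weil $\mathbb F_q[t]$-module is isomorphic to $\operatorname{Ext}^1_{0,\tau}(\phi,\psi)$, the isomorphism being given in the coordinates $c_1,\dots,c_{n-1}$ above).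
   Context: $A=\mathbb F_q[t]$, $K$ a field of characteristic $p$ with $\mathbb F_q$-algebra map $\iota:A\to K$, $\theta=\iota(t)$; $K\{\tau\}$ twisted polynomials, $\tau x=x^q\tau$. A $\mathbf t$-module of dimension $d$: $\mathbb F_q$-algebra homomorphism $\Phi:\mathbb F_q[t]\to\mathrm{Mat}_d(K\{\tau\})$, $\Phi_t=(\theta I+N)+\sum_{i\ge1}M_i\tau^i$, $N$ nilpotent; rank $=\deg_\tau\Phi_t$; Drinfeld module = dimension one. Its Mordell–Weil module is $K^d$ with $t$ acting by evaluation of $\Phi_t$ ($\tau$ acting as $x\mapsto x^q$). $\mathrm{Der}(\phi,\psi)$: $\mathbb F_q$-linear $\delta:\mathbb F_q[t]\to K\{\tau\}$ with $\delta(ab)=\psi_a\delta(b)+\delta(a)\phi_b$, determined by $\delta(t)$; inner: $\delta^{(U)}(a)=U\phi_a-\psi_aU$. $\operatorname{Ext}^1_\tau(\phi,\psi)=\mathrm{Der}(\phi,\psi)/\mathrm{Der}_{in}(\phi,\psi)$ with $a*[\delta]=[\psi_a\delta]$; each class contains exactly one $\delta$ with $\deg_\tau\delta(t)<\operatorname{rk}\phi$. $\mathrm{Der}_0(\phi,\psi)=\{\delta\in\mathrm{Der}(\phi,\psi)\mid \delta(t)\text{ has zero constant term}\}$ and $\operatorname{Ext}^1_{0,\tau}(\phi,\psi)=\mathrm{Der}_0(\phi,\psi)/(\mathrm{Der}_0(\phi,\psi)\cap\mathrm{Der}_{in}(\phi,\psi))$, with the same module structure. *)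

theory Defs
  imports "HOL-Computational_Algebra.Computational_Algebra"
begin

text \<open>Fq q is the set of roots of x^q - x in K, which is the copy of F_q in K
  (the theorem assumes it has exactly q elements).
  Elements of A = F_q[t] are represented as 'k poly whose coefficients lie in Fq q;
  the variable t is [:0,1:].\<close>

definition Fq :: "nat \<Rightarrow> 'k::field set" where
  "Fq q = {x. x ^ q = x}"

definition Apoly :: "nat \<Rightarrow> 'k::field poly set" where
  "Apoly q = {a. \<forall>i. coeff a i \<in> Fq q}"

abbreviation tvar :: "'k::field poly" where
  "tvar \<equiv> [:0, 1:]"

text \<open>An element sum c_i tau^i of K{tau} is represented by the 'k poly with coeff i = c_i.
  Addition is polynomial addition; multiplication is twisted: tau x = x^q tau.\<close>

definition tmul :: "nat \<Rightarrow> 'k::field poly \<Rightarrow> 'k poly \<Rightarrow> 'k poly" where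
  "tmul q f g = (\<Sum>i\<le>degree f. \<Sum>j\<le>degree g. monom (coeff f i * coeff g j ^ (q ^ i)) (i + j))"

definition tev :: "nat \<Rightarrow> 'k::field poly \<Rightarrow> 'k \<Rightarrow> 'k" where
  "tev q f x = (\<Sum>k\<le>degree f. coeff f k * x ^ (q ^ k))"

section \<open>Matrices over K{tau} and over K (indices < d, zero outside)\<close>

definition is_tmat :: "nat \<Rightarrow> (nat \<Rightarrow> nat \<Rightarrow> 'k::field poly) \<Rightarrow> bool" where
  "is_tmat d M \<longleftrightarrow> (\<forall>i j. (d \<le> i \<or> d \<le> j) \<longrightarrow> M i j = 0)"

definition tmat_mul :: "nat \<Rightarrow> nat \<Rightarrow> (nat \<Rightarrow> nat \<Rightarrow> 'k::field poly) \<Rightarrow> (nat \<Rightarrow> nat \<Rightarrow> 'k poly)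
    \<Rightarrow> (nat \<Rightarrow> nat \<Rightarrow> 'k poly)" where
  "tmat_mul q d M N = (\<lambda>i j. \<Sum>k<d. tmul q (M i k) (N k j))"

definition tmat_one :: "nat \<Rightarrow> (nat \<Rightarrow> nat \<Rightarrow> 'k::field poly)" where
  "tmat_one d = (\<lambda>i j. if i = j \<and> i < d then 1 else 0)"

definition kmat_mul :: "nat \<Rightarrow> (nat \<Rightarrow> nat \<Rightarrow> 'k::field) \<Rightarrow> (nat \<Rightarrow> nat \<Rightarrow> 'k) \<Rightarrow> (nat \<Rightarrow> nat \<Rightarrow> 'k)" where
  "kmat_mul d M N = (\<lambda>i j. \<Sum>k<d. M i k * N k j)"

definition kmat_one :: "nat \<Rightarrow> (nat \<Rightarrow> nat \<Rightarrow> 'k::field)" where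
  "kmat_one d = (\<lambda>i j. if i = j \<and> i < d then 1 else 0)"

definition nilpotent_kmat :: "nat \<Rightarrow> (nat \<Rightarrow> nat \<Rightarrow> 'k::field) \<Rightarrow> bool" where
  "nilpotent_kmat d N \<longleftrightarrow> (\<exists>k. \<forall>i<d. \<forall>j<d. ((kmat_mul d N) ^^ k) (kmat_one d) i j = 0)"

definition t_module :: "nat \<Rightarrow> 'k::field \<Rightarrow> nat \<Rightarrow> ('k poly \<Rightarrow> nat \<Rightarrow> nat \<Rightarrow> 'k poly) \<Rightarrow> bool" where
  "t_module q \<theta> d \<Phi> \<longleftrightarrow>
     (\<forall>a\<in>Apoly q. is_tmat d (\<Phi> a)) \<and>
     \<Phi> 1 = tmat_one d \<and>
     (\<forall>a\<in>Apoly q. \<forall>b\<in>Apoly q. \<Phi> (a + b) = (\<lambda>i j. \<Phi> a i j + \<Phi> b i j)) \<and>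
     (\<forall>a\<in>Apoly q. \<forall>b\<in>Apoly q. \<Phi> (a * b) = tmat_mul q d (\<Phi> a) (\<Phi> b)) \<and>
     (\<forall>c\<in>Fq q. \<forall>a\<in>Apoly q. \<Phi> (smult c a) = (\<lambda>i j. smult c (\<Phi> a i j))) \<and>
     nilpotent_kmat d (\<lambda>i j. coeff (\<Phi> tvar i j) 0 - (if i = j then \<theta> else 0))"

text \<open>Drinfeld module = t-module of dimension one; stated directly with values in K{tau}.
  (A 1x1 nilpotent matrix is 0, so the condition is: constant term of phi_t is theta.)\<close>

definition drinfeld_module :: "nat \<Rightarrow> 'k::field \<Rightarrow> ('k poly \<Rightarrow> 'k poly) \<Rightarrow> bool" where
  "drinfeld_module q \<theta> \<phi> \<longleftrightarrow>
     \<phi> 1 = 1 \<and>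
     (\<forall>a\<in>Apoly q. \<forall>b\<in>Apoly q. \<phi> (a + b) = \<phi> a + \<phi> b) \<and>
     (\<forall>a\<in>Apoly q. \<forall>b\<in>Apoly q. \<phi> (a * b) = tmul q (\<phi> a) (\<phi> b)) \<and>
     (\<forall>c\<in>Fq q. \<forall>a\<in>Apoly q. \<phi> (smult c a) = smult c (\<phi> a)) \<and>
     coeff (\<phi> tvar) 0 = \<theta>"

definition rk :: "('k::field poly \<Rightarrow> 'k poly) \<Rightarrow> nat" where
  "rk \<phi> = degree (\<phi> tvar)"

section \<open>Mordell-Weil module of a t-module: K^d (vectors zero outside indices < d)\<close>

definition Kvec :: "nat \<Rightarrow> (nat \<Rightarrow> 'k::field) set" where
  "Kvec d = {x. \<forall>i. d \<le> i \<longrightarrow> x i = 0}"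

definition mw_add :: "(nat \<Rightarrow> 'k::field) \<Rightarrow> (nat \<Rightarrow> 'k) \<Rightarrow> (nat \<Rightarrow> 'k)" where
  "mw_add x y = (\<lambda>i. x i + y i)"

definition mw_act :: "nat \<Rightarrow> nat \<Rightarrow> ('k::field poly \<Rightarrow> nat \<Rightarrow> nat \<Rightarrow> 'k poly) \<Rightarrow> 'k poly
    \<Rightarrow> (nat \<Rightarrow> 'k) \<Rightarrow> (nat \<Rightarrow> 'k)" where
  "mw_act q d \<Phi> a x = (\<lambda>i. if i < d then (\<Sum>j<d. tev q (\<Phi> a i j) (x j)) else 0)"

text \<open>Derivations are maps A \<rightarrow> K{tau}; represented as functions on 'k poly that vanish outside A.\<close>

definition Der :: "nat \<Rightarrow> ('k::field poly \<Rightarrow> 'k poly) \<Rightarrow> ('k poly \<Rightarrow> 'k poly) \<Rightarrow> ('k poly \<Rightarrow> 'k poly) set" where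
  "Der q \<phi> \<psi> = {\<delta>.
     (\<forall>a\<in>Apoly q. \<forall>b\<in>Apoly q. \<delta> (a + b) = \<delta> a + \<delta> b) \<and>
     (\<forall>c\<in>Fq q. \<forall>a\<in>Apoly q. \<delta> (smult c a) = smult c (\<delta> a)) \<and>
     (\<forall>a\<in>Apoly q. \<forall>b\<in>Apoly q. \<delta> (a * b) = tmul q (\<psi> a) (\<delta> b) + tmul q (\<delta> a) (\<phi> b)) \<and>
     (\<forall>a. a \<notin> Apoly q \<longrightarrow> \<delta> a = 0)}"

definition inner_der :: "nat \<Rightarrow> ('k::field poly \<Rightarrow> 'k poly) \<Rightarrow> ('k poly \<Rightarrow> 'k poly) \<Rightarrow> 'k poly
    \<Rightarrow> ('k poly \<Rightarrow> 'k poly)" where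
  "inner_der q \<phi> \<psi> U = (\<lambda>a. if a \<in> Apoly q then tmul q U (\<phi> a) - tmul q (\<psi> a) U else 0)"

definition Der_in :: "nat \<Rightarrow> ('k::field poly \<Rightarrow> 'k poly) \<Rightarrow> ('k poly \<Rightarrow> 'k poly) \<Rightarrow> ('k poly \<Rightarrow> 'k poly) set" where
  "Der_in q \<phi> \<psi> = range (inner_der q \<phi> \<psi>)"

definition Der0 :: "nat \<Rightarrow> ('k::field poly \<Rightarrow> 'k poly) \<Rightarrow> ('k poly \<Rightarrow> 'k poly) \<Rightarrow> ('k poly \<Rightarrow> 'k poly) set" where
  "Der0 q \<phi> \<psi> = {\<delta> \<in> Der q \<phi> \<psi>. coeff (\<delta> tvar) 0 = 0}"

definition ext_rel :: "nat \<Rightarrow> ('k::field poly \<Rightarrow> 'k poly) \<Rightarrow> ('k poly \<Rightarrow> 'k poly)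
    \<Rightarrow> ('k poly \<Rightarrow> 'k poly) set \<Rightarrow> (('k poly \<Rightarrow> 'k poly) \<times> ('k poly \<Rightarrow> 'k poly)) set" where
  "ext_rel q \<phi> \<psi> D = {(\<delta>, \<delta>'). \<delta> \<in> D \<and> \<delta>' \<in> D \<and> (\<lambda>a. \<delta> a - \<delta>' a) \<in> D \<inter> Der_in q \<phi> \<psi>}"

definition ext_cls :: "nat \<Rightarrow> ('k::field poly \<Rightarrow> 'k poly) \<Rightarrow> ('k poly \<Rightarrow> 'k poly)
    \<Rightarrow> ('k poly \<Rightarrow> 'k poly) set \<Rightarrow> ('k poly \<Rightarrow> 'k poly) \<Rightarrow> ('k poly \<Rightarrow> 'k poly) set" where
  "ext_cls q \<phi> \<psi> D \<delta> = ext_rel q \<phi> \<psi> D `` {\<delta>}"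

definition Ext1 :: "nat \<Rightarrow> ('k::field poly \<Rightarrow> 'k poly) \<Rightarrow> ('k poly \<Rightarrow> 'k poly) \<Rightarrow> ('k poly \<Rightarrow> 'k poly) set set" where
  "Ext1 q \<phi> \<psi> = Der q \<phi> \<psi> // ext_rel q \<phi> \<psi> (Der q \<phi> \<psi>)"

definition Ext1_0 :: "nat \<Rightarrow> ('k::field poly \<Rightarrow> 'k poly) \<Rightarrow> ('k poly \<Rightarrow> 'k poly) \<Rightarrow> ('k poly \<Rightarrow> 'k poly) set set" where
  "Ext1_0 q \<phi> \<psi> = Der0 q \<phi> \<psi> // ext_rel q \<phi> \<psi> (Der0 q \<phi> \<psi>)"

definition rep :: "('k poly \<Rightarrow> 'k poly) set \<Rightarrow> ('k poly \<Rightarrow> 'k poly)" where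
  "rep X = (SOME \<delta>. \<delta> \<in> X)"

definition ext_add :: "nat \<Rightarrow> ('k::field poly \<Rightarrow> 'k poly) \<Rightarrow> ('k poly \<Rightarrow> 'k poly) \<Rightarrow> ('k poly \<Rightarrow> 'k poly) set
    \<Rightarrow> ('k poly \<Rightarrow> 'k poly) set \<Rightarrow> ('k poly \<Rightarrow> 'k poly) set \<Rightarrow> ('k poly \<Rightarrow> 'k poly) set" where
  "ext_add q \<phi> \<psi> D X Y = ext_cls q \<phi> \<psi> D (\<lambda>b. rep X b + rep Y b)"

definition ext_act :: "nat \<Rightarrow> ('k::field poly \<Rightarrow> 'k poly) \<Rightarrow> ('k poly \<Rightarrow> 'k poly) \<Rightarrow> ('k poly \<Rightarrow> 'k poly) set
    \<Rightarrow> 'k poly \<Rightarrow> ('k poly \<Rightarrow> 'k poly) set \<Rightarrow> ('k poly \<Rightarrow> 'k poly) set" where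
  "ext_act q \<phi> \<psi> D a X = ext_cls q \<phi> \<psi> D (\<lambda>b. tmul q (\<psi> a) (rep X b))"

definition der_of :: "nat \<Rightarrow> ('k::field poly \<Rightarrow> 'k poly) \<Rightarrow> ('k poly \<Rightarrow> 'k poly) \<Rightarrow> 'k poly
    \<Rightarrow> ('k poly \<Rightarrow> 'k poly)" where
  "der_of q \<phi> \<psi> w = (THE \<delta>. \<delta> \<in> Der q \<phi> \<psi> \<and> \<delta> tvar = w)"

definition Tlt :: "nat \<Rightarrow> 'k::field poly set" where
  "Tlt n = {w. degree w < n}"

definition T1n :: "nat \<Rightarrow> 'k::field poly set" where
  "T1n n = {w. degree w < n \<and> coeff w 0 = 0}"

definition ext_of :: "nat \<Rightarrow> ('k::field poly \<Rightarrow> 'k poly) \<Rightarrow> ('k poly \<Rightarrow> 'k poly) \<Rightarrow> 'k poly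
    \<Rightarrow> ('k poly \<Rightarrow> 'k poly) set" where
  "ext_of q \<phi> \<psi> w = ext_cls q \<phi> \<psi> (Der q \<phi> \<psi>) (der_of q \<phi> \<psi> w)"

definition trans_add :: "nat \<Rightarrow> ('k::field poly \<Rightarrow> 'k poly) \<Rightarrow> ('k poly \<Rightarrow> 'k poly) \<Rightarrow> 'k poly \<Rightarrow> 'k poly \<Rightarrow> 'k poly" where
  "trans_add q \<phi> \<psi> v w = inv_into (Tlt (rk \<phi>)) (ext_of q \<phi> \<psi>)
      (ext_add q \<phi> \<psi> (Der q \<phi> \<psi>) (ext_of q \<phi> \<psi> v) (ext_of q \<phi> \<psi> w))"

definition trans_act :: "nat \<Rightarrow> ('k::field poly \<Rightarrow> 'k poly) \<Rightarrow> ('k poly \<Rightarrow> 'k poly) \<Rightarrow> 'k poly \<Rightarrow> 'k poly \<Rightarrow> 'k poly" where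
  "trans_act q \<phi> \<psi> a w = inv_into (Tlt (rk \<phi>)) (ext_of q \<phi> \<psi>)
      (ext_act q \<phi> \<psi> (Der q \<phi> \<psi>) a (ext_of q \<phi> \<psi> w))"

end

theory Submission
  imports Defs
begin

(* A derivation delta is determined by w = delta(t), and every twisted polynomial w occurs;
   delta is inner exactly when w = U phi_t - psi_t U.  Since deg psi_t < deg phi_t = n, the
   leading term of U phi_t - psi_t U is that of U phi_t, so division by phi_t from the right gives
   every w a unique remainder of degree < n modulo these values.  The remainder has the same
   constant term as w, because phi_t and psi_t both have constant term theta.  Hence Ext^1 is
   K{tau}_{<n} with a * w = remainder of psi_a w, and Ext^1_0 is the part without constant term.
   For the t-module, the remainder of psi_t c tau^(j+1) is computed by the same division with
   coefficients that are twisted polynomials in c; their coefficients of tau, ..., tau^(n-1) form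
   the matrix Pi0_t, whose constant term is theta I, and Pi0_a follows by Horner's scheme. *)
section \<open>Twisted polynomials\<close>

definition monom_double_sum :: "nat \<Rightarrow> nat \<Rightarrow> (nat \<Rightarrow> nat \<Rightarrow> 'a::comm_monoid_add) \<Rightarrow> 'a poly" where
  "monom_double_sum A B F = (\<Sum>i\<le>A. \<Sum>j\<le>B. monom (F i j) (i + j))"

lemma coeff_monom_double_sum:
  "coeff (monom_double_sum A B F) k = (\<Sum>i\<le>A. \<Sum>j\<le>B. if i + j = k then F i j else 0)"
  unfolding monom_double_sum_def by (simp add: coeff_sum)

lemma coeff_monom_double_sum_above: "A + B < k \<Longrightarrow> coeff (monom_double_sum A B F) k = 0"
  unfolding coeff_monom_double_sum by (intro sum.neutral ballI) auto

lemma coeff_monom_double_sum_top: "coeff (monom_double_sum A B F) (A + B) = F A B"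
proof -
  have "(\<Sum>j\<le>B. if i + j = A + B then F i j else 0) = (if i = A then F A B else 0)" if "i \<le> A" for i
  proof (cases "i = A")
    case True
    then show ?thesis by (simp add: sum.delta'[of "{..B}" B "F A", simplified] if_distrib cong: if_cong)
  next
    case False
    with that show ?thesis by (intro trans[OF sum.neutral]) auto
  qed
  then show ?thesis by (simp add: coeff_monom_double_sum)
qed

lemma coeff_monom_double_sum_0: "coeff (monom_double_sum A B F) 0 = F 0 0"
proof -
  have "coeff (monom_double_sum A B F) 0 = (\<Sum>i\<le>A. if i = 0 then F 0 0 else 0)"
    unfolding coeff_monom_double_sum by (intro sum.cong refl) auto
  then show ?thesis by simp
qed

lemma monom_double_sum_extend:
  assumes "A \<le> A'" "B \<le> B'" "\<And>i j. i > A \<or> j > B \<Longrightarrow> F i j = 0"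
  shows "monom_double_sum A' B' F = monom_double_sum A B F"
proof -
  have "monom_double_sum A' B' F = (\<Sum>i\<le>A. \<Sum>j\<le>B'. monom (F i j) (i + j))"
    unfolding monom_double_sum_def using assms by (intro sum.mono_neutral_right) (auto intro!: sum.neutral)
  also have "\<dots> = monom_double_sum A B F"
    unfolding monom_double_sum_def using assms by (intro sum.cong refl sum.mono_neutral_right) auto
  finally show ?thesis .
qed

lemma smult_sum_right: "smult c (\<Sum>i\<in>A. f i) = (\<Sum>i\<in>A. smult c (f i))"
  by (induction A rule: infinite_finite_induct) (auto simp: smult_add_right)

locale twisted_polys =
  fixes q m :: nat
  assumes prime_char: "prime CHAR('k::field)" and exponent_pos: "0 < m" and q_eq: "q = CHAR('k) ^ m"
begin

abbreviation tmul_q :: "'k poly \<Rightarrow> 'k poly \<Rightarrow> 'k poly" (infixl "\<odot>" 70) where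
  "f \<odot> g \<equiv> tmul q f g"

lemma q_ge_2: "2 \<le> q"
proof -
  have "2 \<le> CHAR('k)" using prime_char prime_ge_2_nat by blast
  moreover have "CHAR('k) ^ 1 \<le> CHAR('k) ^ m" using exponent_pos \<open>2 \<le> CHAR('k)\<close>
    by (intro power_increasing) auto
  ultimately show ?thesis using q_eq by simp
qed

lemma q_power_pos: "0 < q ^ k" using q_ge_2 by simp

lemma zero_power_q_power [simp]: "(0::'a::semiring_1) ^ (q ^ k) = 0"
  using q_power_pos[of k] by (simp add: power_0_left)

lemma q_power_eq: "q ^ k = CHAR('k) ^ (m * k)"
  by (simp add: q_eq power_mult)

lemma frobenius_add: "(x + y :: 'k) ^ (q ^ k) = x ^ (q ^ k) + y ^ (q ^ k)"
  unfolding q_power_eq by (rule freshmans_dream'[OF prime_char]) simp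

lemma frobenius_add_poly: "(x + y :: 'k poly) ^ (q ^ k) = x ^ (q ^ k) + y ^ (q ^ k)"
  unfolding q_power_eq by (rule freshmans_dream') (simp_all add: prime_char)

lemma frobenius_sum_poly: "(sum f A :: 'k poly) ^ (q ^ k) = (\<Sum>i\<in>A. f i ^ (q ^ k))"
  unfolding q_power_eq by (rule freshmans_dream_sum') (simp_all add: prime_char)

lemma Fq_power: "(c::'k) \<in> Fq q \<Longrightarrow> c ^ (q ^ k) = c"
proof (induction k)
  case (Suc k)
  have "c ^ (q ^ Suc k) = (c ^ q) ^ (q ^ k)" by (simp add: power_mult[symmetric] mult.commute)
  then show ?case using Suc by (simp add: Fq_def)
qed simp

lemma Fq_0: "(0::'k) \<in> Fq q" using q_ge_2 by (simp add: Fq_def)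
lemma Fq_1: "(1::'k) \<in> Fq q" by (simp add: Fq_def)
lemma Fq_add: "(c::'k) \<in> Fq q \<Longrightarrow> d \<in> Fq q \<Longrightarrow> c + d \<in> Fq q"
  using frobenius_add[of c d 1] by (simp add: Fq_def)
lemma Fq_mult: "(c::'k) \<in> Fq q \<Longrightarrow> d \<in> Fq q \<Longrightarrow> c * d \<in> Fq q"
  by (simp add: Fq_def power_mult_distrib)
lemma Fq_sum: "(\<And>i. i \<in> A \<Longrightarrow> f i \<in> Fq q) \<Longrightarrow> (sum f A::'k) \<in> Fq q"
  by (induction A rule: infinite_finite_induct) (auto simp: Fq_0 Fq_add)

lemma Apoly_pCons_iff: "pCons (c::'k) a \<in> Apoly q \<longleftrightarrow> c \<in> Fq q \<and> a \<in> Apoly q"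
  unfolding Apoly_def mem_Collect_eq
  by (metis coeff_pCons_0 coeff_pCons_Suc nat.exhaust)

lemma Apoly_0: "(0::'k poly) \<in> Apoly q" by (simp add: Apoly_def Fq_0)
lemma Apoly_1: "(1::'k poly) \<in> Apoly q" by (simp add: Apoly_def Fq_0 Fq_1)
lemma Apoly_t: "(tvar::'k poly) \<in> Apoly q" by (simp add: Apoly_def Fq_0 Fq_1 coeff_pCons')
lemma Apoly_const: "(c::'k) \<in> Fq q \<Longrightarrow> [:c:] \<in> Apoly q" by (simp add: Apoly_pCons_iff Apoly_0)
lemma Apoly_add: "(a::'k poly) \<in> Apoly q \<Longrightarrow> b \<in> Apoly q \<Longrightarrow> a + b \<in> Apoly q"
  by (simp add: Apoly_def Fq_add)
lemma Apoly_mult: "(a::'k poly) \<in> Apoly q \<Longrightarrow> b \<in> Apoly q \<Longrightarrow> a * b \<in> Apoly q"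
  unfolding Apoly_def by (auto simp: coeff_mult intro!: Fq_sum Fq_mult)
lemma Apoly_smult: "(c::'k) \<in> Fq q \<Longrightarrow> a \<in> Apoly q \<Longrightarrow> smult c a \<in> Apoly q"
  by (simp add: Apoly_def Fq_mult)

lemma Apoly_induct[consumes 1, case_names 0 pCons]:
  assumes "(a::'k poly) \<in> Apoly q" "P 0"
    and "\<And>c a. c \<in> Fq q \<Longrightarrow> a \<in> Apoly q \<Longrightarrow> P a \<Longrightarrow> P (pCons c a)"
  shows "P a"
  using assms(1)
proof (induction a)
  case (pCons c a)
  then show ?case using assms(3) Apoly_pCons_iff by blast
qed (use assms(2) in simp)

text \<open>Evaluating a twisted polynomial at a polynomial v (with \<open>\<tau>\<close> acting as v \<mapsto> v^q) turns
  twisted multiplication into composition, and evaluation at X is injective; this transports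
  the ring laws of composition to \<^const>\<open>tmul\<close>.\<close>

definition tev_poly :: "'k poly \<Rightarrow> 'k poly \<Rightarrow> 'k poly" where
  "tev_poly f v = (\<Sum>k\<le>degree f. smult (coeff f k) (v ^ (q ^ k)))"

lemma tev_poly_bound:
  "degree f \<le> N \<Longrightarrow> tev_poly f v = (\<Sum>k\<le>N. smult (coeff f k) (v ^ (q ^ k)))"
  unfolding tev_poly_def by (intro sum.mono_neutral_left) (auto simp: coeff_eq_0)

lemma tev_poly_add: "tev_poly (f + g) v = tev_poly f v + tev_poly g v"
proof -
  let ?N = "max (degree f) (degree g)"
  have "tev_poly (f + g) v = (\<Sum>k\<le>?N. smult (coeff (f + g) k) (v ^ (q ^ k)))"
    by (rule tev_poly_bound) (simp add: degree_add_le)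
  also have "\<dots> = tev_poly f v + tev_poly g v"
    using tev_poly_bound[of f ?N v] tev_poly_bound[of g ?N v]
    by (simp add: smult_add_left sum.distrib)
  finally show ?thesis .
qed

lemma tev_poly_0 [simp]: "tev_poly 0 v = 0" by (simp add: tev_poly_def)

lemma tev_poly_sum: "tev_poly (\<Sum>i\<in>A. f i) v = (\<Sum>i\<in>A. tev_poly (f i) v)"
  by (induction A rule: infinite_finite_induct) (auto simp: tev_poly_add)

lemma tev_poly_monom: "tev_poly (monom c k) v = smult c (v ^ (q ^ k))"
proof -
  have "tev_poly (monom c k) v = (\<Sum>j\<le>k. smult (coeff (monom c k) j) (v ^ (q ^ j)))"
    by (rule tev_poly_bound) (simp add: degree_monom_le)
  also have "\<dots> = (\<Sum>j\<le>k. if j = k then smult c (v ^ (q ^ k)) else 0)"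
    by (intro sum.cong) auto
  finally show ?thesis by simp
qed

lemma tev_poly_const: "tev_poly [:c:] v = smult c v"
  using tev_poly_monom[of c 0 v] by (simp add: monom_0)

lemma tev_poly_smult: "tev_poly (smult c f) v = smult c (tev_poly f v)"
proof -
  have "tev_poly (smult c f) v = (\<Sum>k\<le>degree f. smult (coeff (smult c f) k) (v ^ (q ^ k)))"
    by (rule tev_poly_bound) (simp add: degree_smult_le)
  then show ?thesis by (simp add: tev_poly_def smult_sum_right)
qed

lemma tev_poly_add_arg: "tev_poly f (v + w) = tev_poly f v + tev_poly f w"
  by (simp add: tev_poly_def frobenius_add_poly smult_add_right sum.distrib)

lemma tev_poly_0_arg [simp]: "tev_poly f 0 = 0"
  by (simp add: tev_poly_def)

lemma tev_poly_sum_arg: "tev_poly f (\<Sum>i\<in>A. v i) = (\<Sum>i\<in>A. tev_poly f (v i))"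
  by (induction A rule: infinite_finite_induct) (auto simp: tev_poly_add_arg)

lemma tev_poly_smult_arg: "c \<in> Fq q \<Longrightarrow> tev_poly f (smult c v) = smult c (tev_poly f v)"
  by (simp add: tev_poly_def smult_power Fq_power smult_sum_right mult.commute)

lemma tmul_eq_monom_double_sum:
  "f \<odot> g = monom_double_sum (degree f) (degree g) (\<lambda>i j. coeff f i * coeff g j ^ (q ^ i))"
  by (simp add: tmul_def monom_double_sum_def)

lemma tmul_eq_monom_double_sum_bound:
  assumes "degree f \<le> A" "degree g \<le> B"
  shows "f \<odot> g = monom_double_sum A B (\<lambda>i j. coeff f i * coeff g j ^ (q ^ i))"
  unfolding tmul_eq_monom_double_sum using assms q_power_pos
  by (intro monom_double_sum_extend[symmetric]) (auto simp: coeff_eq_0)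

lemma tev_poly_tmul: "tev_poly (f \<odot> g) v = tev_poly f (tev_poly g v)"
proof -
  have "tev_poly f (tev_poly g v) = (\<Sum>i\<le>degree f. smult (coeff f i)
          ((\<Sum>j\<le>degree g. smult (coeff g j) (v ^ (q ^ j))) ^ (q ^ i)))"
    by (simp add: tev_poly_def)
  also have "\<dots> = (\<Sum>i\<le>degree f. \<Sum>j\<le>degree g.
                    smult (coeff f i * coeff g j ^ (q ^ i)) (v ^ (q ^ (i + j))))"
  proof (intro sum.cong refl)
    fix i
    have power_power: "(v ^ (q ^ j)) ^ (q ^ i) = v ^ (q ^ (i + j))" for j
      by (simp add: power_mult[symmetric] power_add mult.commute)
    have "(\<Sum>j\<le>degree g. smult (coeff g j) (v ^ (q ^ j))) ^ (q ^ i)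
        = (\<Sum>j\<le>degree g. smult (coeff g j ^ (q ^ i)) (v ^ (q ^ (i + j))))"
      by (simp only: frobenius_sum_poly smult_power power_power)
    then show "smult (coeff f i) ((\<Sum>j\<le>degree g. smult (coeff g j) (v ^ (q ^ j))) ^ (q ^ i))
       = (\<Sum>j\<le>degree g. smult (coeff f i * coeff g j ^ (q ^ i)) (v ^ (q ^ (i + j))))"
      by (simp add: smult_sum_right)
  qed
  also have "\<dots> = tev_poly (f \<odot> g) v"
    by (simp add: tmul_eq_monom_double_sum monom_double_sum_def tev_poly_sum tev_poly_monom)
  finally show ?thesis by simp
qed

lemma tev_poly_X: "tev_poly f [:0, 1:] = (\<Sum>k\<le>degree f. monom (coeff f k) (q ^ k))"
  by (simp add: tev_poly_def monom_altdef)

lemma coeff_tev_poly_X: "coeff (tev_poly f [:0, 1:]) (q ^ k) = coeff f k"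
proof -
  have inj: "q ^ j = q ^ k \<longleftrightarrow> j = k" for j
    using q_ge_2 by simp
  have "coeff (tev_poly f [:0, 1:]) (q ^ k) = (\<Sum>j\<le>degree f. if j = k then coeff f j else 0)"
    by (simp add: tev_poly_X coeff_sum inj eq_commute)
  then show ?thesis by (auto simp: coeff_eq_0)
qed

lemma tev_poly_inject: "(\<And>v. tev_poly f v = tev_poly g v) \<Longrightarrow> f = g"
  by (rule poly_eqI) (metis coeff_tev_poly_X)

lemma tmul_assoc: "(f \<odot> g) \<odot> h = f \<odot> (g \<odot> h)"
  by (rule tev_poly_inject) (simp add: tev_poly_tmul)

lemma tmul_add_left: "(f + g) \<odot> h = f \<odot> h + g \<odot> h"
  by (rule tev_poly_inject) (simp add: tev_poly_tmul tev_poly_add)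

lemma tmul_add_right: "f \<odot> (g + h) = f \<odot> g + f \<odot> h"
  by (rule tev_poly_inject) (simp add: tev_poly_tmul tev_poly_add tev_poly_add_arg)

lemma tmul_0_left [simp]: "0 \<odot> f = 0"
  by (rule tev_poly_inject) (simp add: tev_poly_tmul)

lemma tmul_0_right [simp]: "f \<odot> 0 = 0"
  by (rule tev_poly_inject) (simp add: tev_poly_tmul)

lemma tmul_const_left: "[:c:] \<odot> f = smult c f"
  by (rule tev_poly_inject) (simp add: tev_poly_tmul tev_poly_const tev_poly_smult)

lemma tmul_const_right: "c \<in> Fq q \<Longrightarrow> f \<odot> [:c:] = smult c f"
  by (rule tev_poly_inject) (simp add: tev_poly_tmul tev_poly_const tev_poly_smult tev_poly_smult_arg)

lemma tmul_1_left [simp]: "1 \<odot> f = f"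
  using tmul_const_left[of 1 f] by (simp add: one_pCons)

lemma tmul_1_right [simp]: "f \<odot> 1 = f"
  using tmul_const_right[OF Fq_1, of f] by (simp add: one_pCons)

lemma tmul_smult_right: "c \<in> Fq q \<Longrightarrow> f \<odot> smult c g = smult c (f \<odot> g)"
  by (rule tev_poly_inject) (simp add: tev_poly_tmul tev_poly_smult tev_poly_smult_arg)

lemma tmul_minus_left: "(- f) \<odot> g = - (f \<odot> g)"
  using tmul_add_left[of f "- f" g] by (simp add: eq_neg_iff_add_eq_0 add.commute)

lemma tmul_minus_right: "f \<odot> (- g) = - (f \<odot> g)"
  using tmul_add_right[of f g "- g"] by (simp add: eq_neg_iff_add_eq_0 add.commute)

lemma tmul_diff_left: "(f - g) \<odot> h = f \<odot> h - g \<odot> h"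
  using tmul_add_left[of f "- g" h] by (simp add: tmul_minus_left)

lemma tmul_diff_right: "f \<odot> (g - h) = f \<odot> g - f \<odot> h"
  using tmul_add_right[of f g "- h"] by (simp add: tmul_minus_right)

lemma tmul_sum_left: "(\<Sum>i\<in>A. f i) \<odot> h = (\<Sum>i\<in>A. f i \<odot> h)"
  by (induction A rule: infinite_finite_induct) (auto simp: tmul_add_left)

lemma tmul_sum_right: "h \<odot> (\<Sum>i\<in>A. f i) = (\<Sum>i\<in>A. h \<odot> f i)"
  by (induction A rule: infinite_finite_induct) (auto simp: tmul_add_right)

lemma coeff_tmul_0: "coeff (f \<odot> g) 0 = coeff f 0 * coeff g 0"
  by (simp add: tmul_eq_monom_double_sum coeff_monom_double_sum_0)

lemma coeff_tmul_above: "degree f + degree g < k \<Longrightarrow> coeff (f \<odot> g) k = 0"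
  by (simp add: tmul_eq_monom_double_sum coeff_monom_double_sum_above)

lemma coeff_tmul_top:
  "coeff (f \<odot> g) (degree f + degree g) = lead_coeff f * lead_coeff g ^ (q ^ degree f)"
  by (simp add: tmul_eq_monom_double_sum coeff_monom_double_sum_top)

lemma tev_poly_const_arg: "tev_poly f [:x:] = [:tev q f x:]"
  by (simp add: tev_poly_def tev_def poly_const_pow sum_to_poly)

lemma tev_eq_tev_poly: "tev q f x = coeff (tev_poly f [:x:]) 0"
  by (simp add: tev_poly_const_arg)

lemma tev_tmul: "tev q (f \<odot> g) x = tev q f (tev q g x)"
  using tev_poly_tmul[of f g "[:x:]"] by (simp add: tev_poly_const_arg)

lemma tev_add: "tev q (f + g) (x::'k) = tev q f x + tev q g x"
  by (simp add: tev_eq_tev_poly tev_poly_add)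

lemma tev_0 [simp]: "tev q 0 (x::'k) = 0"
  by (simp add: tev_eq_tev_poly)

lemma tev_sum: "tev q (\<Sum>i\<in>A. f i) (x::'k) = (\<Sum>i\<in>A. tev q (f i) x)"
  by (simp add: tev_eq_tev_poly tev_poly_sum coeff_sum)

lemma tev_sum_arg: "tev q f (\<Sum>i\<in>A. x i :: 'k) = (\<Sum>i\<in>A. tev q f (x i))"
  using tev_poly_sum_arg[of f "\<lambda>i. [:x i:]" A] by (simp add: tev_eq_tev_poly sum_to_poly coeff_sum)

lemma tev_monom: "tev q (monom c k) (y::'k) = c * y ^ (q ^ k)"
  by (simp add: tev_eq_tev_poly tev_poly_monom poly_const_pow)

lemma tev_const: "tev q [:c:] (y::'k) = c * y"
  by (simp add: tev_eq_tev_poly tev_poly_const)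

lemma tev_smult: "tev q (smult c f) (y::'k) = c * tev q f y"
  by (simp add: tev_eq_tev_poly tev_poly_smult)

end

section \<open>Derivations are determined by their value at t\<close>

context twisted_polys
begin

lemma drinfeld_module_add:
  "drinfeld_module q \<theta> g \<Longrightarrow> a \<in> Apoly q \<Longrightarrow> b \<in> Apoly q \<Longrightarrow> g (a + b) = g a + g b"
  unfolding drinfeld_module_def by blast

lemma drinfeld_module_mult:
  "drinfeld_module q \<theta> g \<Longrightarrow> a \<in> Apoly q \<Longrightarrow> b \<in> Apoly q \<Longrightarrow> g (a * b) = g a \<odot> g b"
  unfolding drinfeld_module_def by blast

lemma drinfeld_module_smult:
  "drinfeld_module q \<theta> g \<Longrightarrow> c \<in> Fq q \<Longrightarrow> a \<in> Apoly q \<Longrightarrow> g (smult c a) = smult c (g a)"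
  unfolding drinfeld_module_def by blast

lemma drinfeld_module_0: "drinfeld_module q \<theta> g \<Longrightarrow> g (0::'k poly) = 0"
  using drinfeld_module_add[of \<theta> g 0 0] Apoly_0 by (metis add.right_neutral add_left_cancel)

lemma drinfeld_module_1: "drinfeld_module q \<theta> g \<Longrightarrow> g (1::'k poly) = 1"
  unfolding drinfeld_module_def by blast

lemma drinfeld_module_const:
  fixes g :: "'k poly \<Rightarrow> 'k poly"
  assumes "drinfeld_module q \<theta> g" "c \<in> Fq q" shows "g [:c:] = [:c:]"
proof -
  have "g (smult c 1) = smult c (g 1)" using drinfeld_module_smult[OF assms Apoly_1] .
  then show ?thesis using drinfeld_module_1[OF assms(1)] by (simp add: one_pCons)
qed

lemma drinfeld_module_pCons:
  assumes "drinfeld_module q \<theta> g" "c \<in> Fq q" "a \<in> Apoly q"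
  shows "g (pCons c a) = [:c:] + g tvar \<odot> g a"
proof -
  have "g (pCons c a) = g ([:c:] + tvar * a)" by simp
  also have "\<dots> = g [:c:] + g (tvar * a)"
    using assms by (intro drinfeld_module_add) (simp_all add: Apoly_const Apoly_pCons_iff Apoly_0 Fq_0)
  finally have "g (pCons c a) = g [:c:] + g (tvar * a)" .
  then show ?thesis
    using assms drinfeld_module_mult[of \<theta> g tvar a] drinfeld_module_const[of \<theta> g c] Apoly_t
    by simp
qed

lemma drinfeld_module_commute:
  "drinfeld_module q \<theta> g \<Longrightarrow> a \<in> Apoly q \<Longrightarrow> b \<in> Apoly q \<Longrightarrow> g a \<odot> g b = g b \<odot> g a"
  by (metis drinfeld_module_mult mult.commute)

lemma Der_add: "\<delta> \<in> Der q \<phi> \<psi> \<Longrightarrow> a \<in> Apoly q \<Longrightarrow> b \<in> Apoly q \<Longrightarrow> \<delta> (a + b) = \<delta> a + \<delta> b"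
  unfolding Der_def by blast

lemma Der_smult:
  "\<delta> \<in> Der q \<phi> \<psi> \<Longrightarrow> c \<in> Fq q \<Longrightarrow> a \<in> Apoly q \<Longrightarrow> \<delta> (smult c a) = smult c (\<delta> a)"
  unfolding Der_def by blast

lemma Der_mult:
  "\<delta> \<in> Der q \<phi> \<psi> \<Longrightarrow> a \<in> Apoly q \<Longrightarrow> b \<in> Apoly q \<Longrightarrow> \<delta> (a * b) = \<psi> a \<odot> \<delta> b + \<delta> a \<odot> \<phi> b"
  unfolding Der_def by blast

lemma Der_outside: "\<delta> \<in> Der q \<phi> \<psi> \<Longrightarrow> a \<notin> Apoly q \<Longrightarrow> \<delta> a = 0"
  unfolding Der_def by blast

end

locale drinfeld_pair = twisted_polys q m for q m +
  fixes \<theta> :: "'k::field" and \<phi> \<psi> :: "'k poly \<Rightarrow> 'k poly"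
  assumes drinfeld_phi: "drinfeld_module q \<theta> \<phi>" and drinfeld_psi: "drinfeld_module q \<theta> \<psi>"
    and rank_less: "rk \<psi> < rk \<phi>"
begin

lemmas phi_0 = drinfeld_module_0[OF drinfeld_phi] and psi_0 = drinfeld_module_0[OF drinfeld_psi]
lemmas phi_1 = drinfeld_module_1[OF drinfeld_phi] and psi_1 = drinfeld_module_1[OF drinfeld_psi]
lemmas phi_add = drinfeld_module_add[OF drinfeld_phi]
lemmas phi_mult = drinfeld_module_mult[OF drinfeld_phi]
lemmas phi_smult = drinfeld_module_smult[OF drinfeld_phi]
lemmas phi_pCons = drinfeld_module_pCons[OF drinfeld_phi]
lemmas psi_pCons = drinfeld_module_pCons[OF drinfeld_psi]

lemma psi_t_commute: "a \<in> Apoly q \<Longrightarrow> \<psi> tvar \<odot> \<psi> a = \<psi> a \<odot> \<psi> tvar"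
  using drinfeld_module_commute[OF drinfeld_psi Apoly_t] .

text \<open>The derivation with value w at t, computed by Horner's scheme
  \<open>\<delta>(c + t a) = \<psi>\<^sub>t \<delta>(a) + w \<phi>\<^sub>a\<close> on the coefficient list.\<close>

fun der_coeffs :: "'k poly \<Rightarrow> 'k list \<Rightarrow> 'k poly" where
  "der_coeffs w [] = 0"
| "der_coeffs w (c # cs) = \<psi> tvar \<odot> der_coeffs w cs + w \<odot> \<phi> (Poly cs)"

definition der_fun :: "'k poly \<Rightarrow> 'k poly \<Rightarrow> 'k poly" where
  "der_fun w a = der_coeffs w (coeffs a)"

definition der_by :: "'k poly \<Rightarrow> 'k poly \<Rightarrow> 'k poly" where
  "der_by w = (\<lambda>a. if a \<in> Apoly q then der_fun w a else 0)"

lemma der_fun_0 [simp]: "der_fun w 0 = 0" by (simp add: der_fun_def)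

lemma der_fun_pCons: "der_fun w (pCons c a) = \<psi> tvar \<odot> der_fun w a + w \<odot> \<phi> a"
proof (cases "c = 0 \<and> a = 0")
  case False
  then have "coeffs (pCons c a) = c # coeffs a" by (auto simp: cCons_def)
  then show ?thesis by (simp add: der_fun_def)
qed (simp add: phi_0)

lemma der_fun_t: "der_fun w tvar = w"
  using der_fun_pCons[of w 0 "[:1:]"] der_fun_pCons[of w 1 0] phi_0 phi_1 tmul_const_right[OF Fq_1, of w]
  by (simp add: one_pCons)

lemma der_fun_add:
  "a \<in> Apoly q \<Longrightarrow> b \<in> Apoly q \<Longrightarrow> der_fun w (a + b) = der_fun w a + der_fun w b"
proof (induction a arbitrary: b rule: Apoly_induct)
  case (pCons c a)
  from pCons.prems obtain d b' where b: "b = pCons d b'" "b' \<in> Apoly q"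
    by (metis Apoly_pCons_iff pCons_cases)
  then have "der_fun w (pCons c a + b) = \<psi> tvar \<odot> der_fun w (a + b') + w \<odot> \<phi> (a + b')"
    by (simp add: der_fun_pCons)
  also have "\<dots> = \<psi> tvar \<odot> (der_fun w a + der_fun w b') + w \<odot> (\<phi> a + \<phi> b')"
    using pCons b by (simp add: phi_add)
  finally show ?case by (simp add: b der_fun_pCons tmul_add_right algebra_simps)
qed simp

lemma der_fun_smult: "a \<in> Apoly q \<Longrightarrow> c \<in> Fq q \<Longrightarrow> der_fun w (smult c a) = smult c (der_fun w a)"
  by (induction a rule: Apoly_induct)
    (simp_all add: der_fun_pCons phi_smult tmul_smult_right smult_add_right)

lemma der_fun_mult:
  "a \<in> Apoly q \<Longrightarrow> b \<in> Apoly q \<Longrightarrow> der_fun w (a * b) = \<psi> a \<odot> der_fun w b + der_fun w a \<odot> \<phi> b"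
proof (induction a rule: Apoly_induct)
  case (pCons c a)
  have "der_fun w (pCons c a * b) = der_fun w (smult c b) + der_fun w (pCons 0 (a * b))"
    using pCons der_fun_add[of "smult c b" "pCons 0 (a * b)" w]
    by (simp add: Apoly_smult Apoly_mult Apoly_pCons_iff Fq_0)
  also have "\<dots> = smult c (der_fun w b)
      + \<psi> tvar \<odot> (\<psi> a \<odot> der_fun w b + der_fun w a \<odot> \<phi> b) + w \<odot> (\<phi> a \<odot> \<phi> b)"
    using pCons by (simp add: der_fun_smult der_fun_pCons phi_mult)
  also have "\<dots> = \<psi> (pCons c a) \<odot> der_fun w b + der_fun w (pCons c a) \<odot> \<phi> b"
    using pCons by (simp add: psi_pCons der_fun_pCons tmul_add_left tmul_add_right
        tmul_const_left tmul_assoc algebra_simps)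
  finally show ?case .
qed (simp add: psi_0)

lemma der_fun_add_val: "der_fun (v + w) a = der_fun v a + der_fun w a"
  by (induction a) (simp_all add: der_fun_pCons tmul_add_right tmul_add_left algebra_simps)

lemma der_fun_minus_val: "der_fun (- w) a = - der_fun w a"
  by (induction a) (simp_all add: der_fun_pCons tmul_minus_right tmul_minus_left algebra_simps)

lemma der_fun_psi_val:
  "b \<in> Apoly q \<Longrightarrow> a \<in> Apoly q \<Longrightarrow> der_fun (\<psi> a \<odot> w) b = \<psi> a \<odot> der_fun w b"
  by (induction b rule: Apoly_induct)
    (simp_all add: der_fun_pCons tmul_add_right tmul_assoc[symmetric] psi_t_commute)

lemma der_fun_inner_val:
  "b \<in> Apoly q \<Longrightarrow> der_fun (U \<odot> \<phi> tvar - \<psi> tvar \<odot> U) b = U \<odot> \<phi> b - \<psi> b \<odot> U"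
proof (induction b rule: Apoly_induct)
  case (pCons c b)
  then show ?case
    by (simp add: der_fun_pCons phi_pCons psi_pCons tmul_add_right tmul_add_left
        tmul_diff_right tmul_diff_left tmul_assoc tmul_const_left tmul_const_right)
qed (simp add: phi_0 psi_0)

lemma der_by_Der: "der_by w \<in> Der q \<phi> \<psi>"
  unfolding Der_def der_by_def
  by (auto simp: Apoly_add Apoly_smult Apoly_mult der_fun_add der_fun_smult der_fun_mult)

lemma der_by_t [simp]: "der_by w tvar = w"
  by (simp add: der_by_def Apoly_t der_fun_t)

lemma der_by_add: "der_by (v + w) a = der_by v a + der_by w a"
  by (simp add: der_by_def der_fun_add_val)

lemma der_by_diff: "der_by (v - w) a = der_by v a - der_by w a"
  using der_fun_add_val[of v "- w" a] by (simp add: der_by_def der_fun_minus_val)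

lemma der_by_psi: "a \<in> Apoly q \<Longrightarrow> \<psi> a \<odot> der_by w b = der_by (\<psi> a \<odot> w) b"
  by (simp add: der_by_def der_fun_psi_val)

lemma Der_1: assumes "\<delta> \<in> Der q \<phi> \<psi>" shows "\<delta> 1 = 0"
proof -
  have "\<delta> (1 * 1) = \<delta> 1 + \<delta> 1" using Der_mult[OF assms Apoly_1 Apoly_1] by (simp add: psi_1 phi_1)
  then show ?thesis by (metis add.right_neutral add_left_cancel mult_1)
qed

lemma Der_eq_der_by: assumes "\<delta> \<in> Der q \<phi> \<psi>" shows "\<delta> = der_by (\<delta> tvar)"
proof
  fix a
  have "\<delta> a = der_fun (\<delta> tvar) a" if "a \<in> Apoly q"
    using that
  proof (induction a rule: Apoly_induct)
    case 0
    show ?case using Der_add[OF assms Apoly_0 Apoly_0] by (metis add.right_neutral add_left_cancel der_fun_0)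
  next
    case (pCons c a)
    have "\<delta> [:c:] = 0"
      using Der_smult[OF assms pCons(1) Apoly_1] Der_1[OF assms] by (simp add: one_pCons)
    moreover have "\<delta> (pCons c a) = \<delta> [:c:] + \<delta> (tvar * a)"
      using Der_add[OF assms, of "[:c:]" "tvar * a"] pCons(1,2)
      by (simp add: Apoly_const Apoly_pCons_iff Apoly_0 Fq_0)
    moreover have "\<delta> (tvar * a) = \<psi> tvar \<odot> \<delta> a + \<delta> tvar \<odot> \<phi> a"
      using Der_mult[OF assms Apoly_t pCons(2)] .
    ultimately show ?case using pCons(3) by (simp add: der_fun_pCons)
  qed
  then show "\<delta> a = der_by (\<delta> tvar) a" using Der_outside[OF assms] by (simp add: der_by_def)
qed

lemma der_of_eq_der_by: "der_of q \<phi> \<psi> w = der_by w"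
  unfolding der_of_def
proof (rule the_equality)
  fix \<delta> assume "\<delta> \<in> Der q \<phi> \<psi> \<and> \<delta> tvar = w"
  then show "\<delta> = der_by w" using Der_eq_der_by by metis
qed (simp add: der_by_Der)

lemma Der_eq_range_der_by: "Der q \<phi> \<psi> = range der_by"
  using der_by_Der Der_eq_der_by by blast

definition const_free :: "'k poly set" where
  "const_free = {w. coeff w 0 = 0}"

lemma Der0_eq_image_der_by: "Der0 q \<phi> \<psi> = der_by ` const_free"
proof -
  have "\<delta> \<in> der_by ` const_free" if "\<delta> \<in> Der0 q \<phi> \<psi>" for \<delta>
    using that Der_eq_der_by[of \<delta>] unfolding Der0_def const_free_def by blast
  then show ?thesis using der_by_Der by (auto simp: Der0_def const_free_def)
qed

definition inner_vals :: "'k poly set" where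
  "inner_vals = range (\<lambda>U. U \<odot> \<phi> tvar - \<psi> tvar \<odot> U)"

lemma inner_der_eq_der_by: "inner_der q \<phi> \<psi> U = der_by (U \<odot> \<phi> tvar - \<psi> tvar \<odot> U)"
  by (auto simp: inner_der_def der_by_def der_fun_inner_val)

lemma Der_in_iff_inner_vals:
  assumes "\<delta> \<in> Der q \<phi> \<psi>" shows "\<delta> \<in> Der_in q \<phi> \<psi> \<longleftrightarrow> \<delta> tvar \<in> inner_vals"
proof
  assume "\<delta> \<in> Der_in q \<phi> \<psi>"
  then obtain U where "\<delta> = inner_der q \<phi> \<psi> U" by (auto simp: Der_in_def)
  then show "\<delta> tvar \<in> inner_vals" by (simp add: inner_der_eq_der_by inner_vals_def)
next
  assume "\<delta> tvar \<in> inner_vals"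
  then obtain U where "\<delta> tvar = U \<odot> \<phi> tvar - \<psi> tvar \<odot> U" by (auto simp: inner_vals_def)
  then have "\<delta> = inner_der q \<phi> \<psi> U" using Der_eq_der_by[OF assms] by (simp add: inner_der_eq_der_by)
  then show "\<delta> \<in> Der_in q \<phi> \<psi>" by (simp add: Der_in_def)
qed

end

section \<open>Remainders modulo the values of inner derivations\<close>

context drinfeld_pair
begin

lemma rk_phi_pos: "0 < rk \<phi>" using rank_less by simp

lemma degree_psi_t_less: "degree (\<psi> tvar) < rk \<phi>" using rank_less by (simp add: rk_def)

lemma lead_coeff_phi_t_nonzero: "lead_coeff (\<phi> tvar) \<noteq> 0"
  using rk_phi_pos by (auto simp: rk_def)

lemma coeff_0_phi_t: "coeff (\<phi> tvar) 0 = \<theta>" using drinfeld_phi by (simp add: drinfeld_module_def)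
lemma coeff_0_psi_t: "coeff (\<psi> tvar) 0 = \<theta>" using drinfeld_psi by (simp add: drinfeld_module_def)

lemma inner_valsI: "U \<odot> \<phi> tvar - \<psi> tvar \<odot> U \<in> inner_vals" by (simp add: inner_vals_def)

lemma inner_vals_0: "0 \<in> inner_vals" using inner_valsI[of 0] by simp

lemma inner_vals_add: assumes "x \<in> inner_vals" "y \<in> inner_vals" shows "x + y \<in> inner_vals"
proof -
  obtain U V where "x = U \<odot> \<phi> tvar - \<psi> tvar \<odot> U" "y = V \<odot> \<phi> tvar - \<psi> tvar \<odot> V"
    using assms by (auto simp: inner_vals_def)
  then have "x + y = (U + V) \<odot> \<phi> tvar - \<psi> tvar \<odot> (U + V)" by (simp add: tmul_add_left tmul_add_right)
  then show ?thesis by (simp add: inner_valsI)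
qed

lemma inner_vals_uminus: assumes "x \<in> inner_vals" shows "- x \<in> inner_vals"
proof -
  obtain U where "x = U \<odot> \<phi> tvar - \<psi> tvar \<odot> U" using assms by (auto simp: inner_vals_def)
  then have "- x = (- U) \<odot> \<phi> tvar - \<psi> tvar \<odot> (- U)" by (simp add: tmul_minus_left tmul_minus_right)
  then show ?thesis by (simp add: inner_valsI)
qed

lemma inner_vals_diff: "x \<in> inner_vals \<Longrightarrow> y \<in> inner_vals \<Longrightarrow> x - y \<in> inner_vals"
  using inner_vals_add[of x "- y"] inner_vals_uminus[of y] by simp

lemma inner_vals_commute: "x - y \<in> inner_vals \<Longrightarrow> y - x \<in> inner_vals"
  using inner_vals_uminus[of "x - y"] by simp

lemma inner_vals_psi: assumes "a \<in> Apoly q" "x \<in> inner_vals" shows "\<psi> a \<odot> x \<in> inner_vals"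
proof -
  obtain U where "x = U \<odot> \<phi> tvar - \<psi> tvar \<odot> U" using assms by (auto simp: inner_vals_def)
  then have "\<psi> a \<odot> x = (\<psi> a \<odot> U) \<odot> \<phi> tvar - \<psi> tvar \<odot> (\<psi> a \<odot> U)"
    using psi_t_commute[OF assms(1)] by (simp add: tmul_diff_right tmul_assoc[symmetric])
  then show ?thesis by (simp add: inner_valsI)
qed

lemma coeff_0_inner_vals: "x \<in> inner_vals \<Longrightarrow> coeff x 0 = 0"
  by (auto simp: inner_vals_def coeff_tmul_0 coeff_0_phi_t coeff_0_psi_t)

text \<open>Since \<open>deg \<psi>\<^sub>t < deg \<phi>\<^sub>t\<close>, the leading term of \<open>U \<phi>\<^sub>t - \<psi>\<^sub>t U\<close> is that of \<open>U \<phi>\<^sub>t\<close>.\<close>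

lemma coeff_inner_val_above:
  "degree U + rk \<phi> < k \<Longrightarrow> coeff (U \<odot> \<phi> tvar - \<psi> tvar \<odot> U) k = 0"
  using degree_psi_t_less by (simp add: coeff_tmul_above rk_def)

lemma coeff_inner_val_top:
  "coeff (U \<odot> \<phi> tvar - \<psi> tvar \<odot> U) (degree U + rk \<phi>)
     = lead_coeff U * lead_coeff (\<phi> tvar) ^ (q ^ degree U)"
  using coeff_tmul_top[of U "\<phi> tvar"] coeff_tmul_above[of "\<psi> tvar" U "degree U + rk \<phi>"]
    degree_psi_t_less by (simp add: rk_def)

lemma remainder_unique:
  assumes "degree r1 < rk \<phi>" "degree r2 < rk \<phi>" "r1 - r2 \<in> inner_vals"
  shows "r1 = r2"
proof -
  obtain U where U: "r1 - r2 = U \<odot> \<phi> tvar - \<psi> tvar \<odot> U" using assms(3) by (auto simp: inner_vals_def)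
  have "coeff (r1 - r2) (degree U + rk \<phi>) = 0"
    using degree_diff_less[OF assms(1,2)] by (intro coeff_eq_0) simp
  then have "U = 0" using coeff_inner_val_top[of U] lead_coeff_phi_t_nonzero by (simp add: U)
  then show ?thesis using U by simp
qed

lemma inner_val_cancels_lead_coeff:
  assumes "rk \<phi> \<le> degree w"
  shows "\<exists>U. degree (w - (U \<odot> \<phi> tvar - \<psi> tvar \<odot> U)) < degree w"
proof -
  define d where "d = degree w - rk \<phi>"
  define U where "U = monom (lead_coeff w / lead_coeff (\<phi> tvar) ^ (q ^ d)) d"
  have w0: "w \<noteq> 0" using assms rk_phi_pos by auto
  then have dU: "degree U = d" using lead_coeff_phi_t_nonzero by (simp add: U_def degree_monom_eq)
  have top: "degree U + rk \<phi> = degree w" using assms by (simp add: dU d_def)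
  have "coeff (w - (U \<odot> \<phi> tvar - \<psi> tvar \<odot> U)) k = 0" if "degree w \<le> k" for k
  proof (cases "k = degree w")
    case True
    then show ?thesis using coeff_inner_val_top[of U] top lead_coeff_phi_t_nonzero
      by (simp add: dU) (simp add: U_def)
  next
    case False
    then show ?thesis using that coeff_inner_val_above[of U k] top by (simp add: coeff_eq_0)
  qed
  then show ?thesis using assms rk_phi_pos by (intro exI[of _ U] degree_lessI) auto
qed

lemma remainder_exists: "\<exists>r. degree r < rk \<phi> \<and> w - r \<in> inner_vals"
proof (induction "degree w" arbitrary: w rule: less_induct)
  case less
  show ?case
  proof (cases "degree w < rk \<phi>")
    case True
    then show ?thesis using inner_vals_0 by (intro exI[of _ w]) simp
  next
    case False
    then obtain U where U: "degree (w - (U \<odot> \<phi> tvar - \<psi> tvar \<odot> U)) < degree w"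
      using inner_val_cancels_lead_coeff by fastforce
    then obtain r where r: "degree r < rk \<phi>" "w - (U \<odot> \<phi> tvar - \<psi> tvar \<odot> U) - r \<in> inner_vals"
      using less by blast
    have "w - r = (w - (U \<odot> \<phi> tvar - \<psi> tvar \<odot> U) - r) + (U \<odot> \<phi> tvar - \<psi> tvar \<odot> U)" by simp
    then have "w - r \<in> inner_vals" using inner_vals_add[OF r(2) inner_valsI] by metis
    then show ?thesis using r by blast
  qed
qed

definition reduce :: "'k poly \<Rightarrow> 'k poly" where
  "reduce w = (THE r. degree r < rk \<phi> \<and> w - r \<in> inner_vals)"

lemma reduce: "degree (reduce w) < rk \<phi> \<and> w - reduce w \<in> inner_vals"
proof -
  obtain r where r: "degree r < rk \<phi>" "w - r \<in> inner_vals" using remainder_exists by blast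
  have "reduce w = r" unfolding reduce_def
  proof (rule the_equality)
    fix r' assume "degree r' < rk \<phi> \<and> w - r' \<in> inner_vals"
    then show "r' = r"
      using r remainder_unique[of r' r] inner_vals_diff[of "w - r" "w - r'"] by simp
  qed (use r in blast)
  then show ?thesis using r by simp
qed

lemma degree_reduce: "degree (reduce w) < rk \<phi>" using reduce by blast
lemma reduce_diff_inner_vals: "w - reduce w \<in> inner_vals" using reduce by blast

lemma reduce_eqI: "degree r < rk \<phi> \<Longrightarrow> w - r \<in> inner_vals \<Longrightarrow> reduce w = r"
  using remainder_unique[of "reduce w" r] reduce[of w] inner_vals_diff[of "w - r" "w - reduce w"]
  by simp

lemma reduce_small: "degree w < rk \<phi> \<Longrightarrow> reduce w = w"
  using reduce_eqI[of w w] inner_vals_0 by simp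

lemma reduce_0: "reduce 0 = 0"
  using reduce_small rk_phi_pos by simp

lemma reduce_reduce: "reduce (reduce w) = reduce w"
  using reduce_small degree_reduce by blast

lemma reduce_add: "reduce (v + w) = reduce v + reduce w"
proof (rule reduce_eqI)
  show "degree (reduce v + reduce w) < rk \<phi>" by (intro degree_add_less degree_reduce)
  have "v + w - (reduce v + reduce w) = (v - reduce v) + (w - reduce w)" by simp
  then show "v + w - (reduce v + reduce w) \<in> inner_vals"
    using inner_vals_add[OF reduce_diff_inner_vals reduce_diff_inner_vals] by metis
qed

lemma reduce_sum: "reduce (\<Sum>i\<in>A. f i) = (\<Sum>i\<in>A. reduce (f i))"
  by (induction A rule: infinite_finite_induct) (auto simp: reduce_add reduce_small rk_phi_pos)

lemma reduce_cong: assumes "v - w \<in> inner_vals" shows "reduce v = reduce w"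
proof (rule reduce_eqI[OF degree_reduce])
  have "v - reduce w = (v - w) + (w - reduce w)" by simp
  then show "v - reduce w \<in> inner_vals" using inner_vals_add[OF assms reduce_diff_inner_vals] by metis
qed

lemma reduce_eq_iff: "reduce v = reduce w \<longleftrightarrow> v - w \<in> inner_vals"
proof
  assume "reduce v = reduce w"
  then have "v - w = (v - reduce v) - (w - reduce w)" by simp
  then show "v - w \<in> inner_vals"
    using inner_vals_diff[OF reduce_diff_inner_vals reduce_diff_inner_vals] by metis
qed (rule reduce_cong)

lemma reduce_psi: assumes "a \<in> Apoly q" shows "reduce (\<psi> a \<odot> reduce w) = reduce (\<psi> a \<odot> w)"
proof (rule reduce_cong)
  have "\<psi> a \<odot> reduce w - \<psi> a \<odot> w = - (\<psi> a \<odot> (w - reduce w))" by (simp add: tmul_diff_right)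
  then show "\<psi> a \<odot> reduce w - \<psi> a \<odot> w \<in> inner_vals"
    using inner_vals_uminus[OF inner_vals_psi[OF assms reduce_diff_inner_vals]] by metis
qed

lemma coeff_0_reduce: "coeff (reduce w) 0 = coeff w 0"
  using coeff_0_inner_vals[OF reduce_diff_inner_vals[of w]] by simp

end

section \<open>Ext as a quotient of twisted polynomials\<close>

context drinfeld_pair
begin

definition psi_submodule :: "'k poly set \<Rightarrow> bool" where
  "psi_submodule S \<longleftrightarrow>
     (\<forall>v\<in>S. \<forall>w\<in>S. v + w \<in> S \<and> v - w \<in> S) \<and> (\<forall>a\<in>Apoly q. \<forall>v\<in>S. \<psi> a \<odot> v \<in> S)"

lemma psi_submodule_UNIV: "psi_submodule UNIV"
  by (simp add: psi_submodule_def)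

lemma const_free_add: "v \<in> const_free \<Longrightarrow> w \<in> const_free \<Longrightarrow> v + w \<in> const_free"
  by (simp add: const_free_def)

lemma const_free_psi: "v \<in> const_free \<Longrightarrow> \<psi> a \<odot> v \<in> const_free"
  by (simp add: const_free_def coeff_tmul_0)

lemma psi_submodule_const_free: "psi_submodule const_free"
  by (simp add: psi_submodule_def const_free_def coeff_tmul_0)

definition cls_on :: "'k poly set \<Rightarrow> 'k poly \<Rightarrow> ('k poly \<Rightarrow> 'k poly) set" where
  "cls_on S v = der_by ` {u \<in> S. v - u \<in> inner_vals}"

lemma ext_cls_der_by:
  assumes S: "psi_submodule S" and v: "v \<in> S"
  shows "ext_cls q \<phi> \<psi> (der_by ` S) (der_by v) = cls_on S v"
proof -
  have "(der_by v, der_by w) \<in> ext_rel q \<phi> \<psi> (der_by ` S) \<longleftrightarrow> v - w \<in> inner_vals"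
    if "w \<in> S" for w
  proof -
    have "(\<lambda>a. der_by v a - der_by w a) = der_by (v - w)" by (simp add: der_by_diff fun_eq_iff)
    moreover have "v - w \<in> S" using S v that by (simp add: psi_submodule_def)
    ultimately show ?thesis
      using v that Der_in_iff_inner_vals[OF der_by_Der, of "v - w"] by (auto simp: ext_rel_def)
  qed
  then show ?thesis by (auto simp: ext_cls_def cls_on_def ext_rel_def)
qed

lemma quotient_der_by:
  assumes "psi_submodule S"
  shows "(der_by ` S) // ext_rel q \<phi> \<psi> (der_by ` S) = cls_on S ` S"
proof -
  have "(der_by ` S) // ext_rel q \<phi> \<psi> (der_by ` S) = (\<lambda>v. ext_cls q \<phi> \<psi> (der_by ` S) (der_by v)) ` S"
    by (auto simp: quotient_def ext_cls_def)
  then show ?thesis using ext_cls_der_by[OF assms] by simp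
qed

lemma cls_on_eq_iff:
  assumes "v \<in> S" "w \<in> S" shows "cls_on S v = cls_on S w \<longleftrightarrow> v - w \<in> inner_vals"
proof
  assume "cls_on S v = cls_on S w"
  then have "der_by v \<in> cls_on S w" using assms inner_vals_0 by (auto simp: cls_on_def)
  then obtain u where "w - u \<in> inner_vals" "der_by v = der_by u" by (auto simp: cls_on_def)
  then show "v - w \<in> inner_vals" by (metis der_by_t inner_vals_commute)
next
  assume vw: "v - w \<in> inner_vals"
  have "v - u \<in> inner_vals \<longleftrightarrow> w - u \<in> inner_vals" for u
    using inner_vals_diff[of "v - u" "v - w"] inner_vals_add[OF vw, of "w - u"] vw by auto
  then show "cls_on S v = cls_on S w" by (simp add: cls_on_def)
qed

lemma rep_cls_on:
  assumes "v \<in> S"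
  obtains u where "u \<in> S" "v - u \<in> inner_vals" "rep (cls_on S v) = der_by u"
proof -
  have "der_by v \<in> cls_on S v" using assms inner_vals_0 by (auto simp: cls_on_def)
  then have "rep (cls_on S v) \<in> cls_on S v" unfolding rep_def by (rule someI[where P = "\<lambda>\<delta>. \<delta> \<in> cls_on S v"])
  then show ?thesis using that by (auto simp: cls_on_def)
qed

lemma ext_cls_rep_cls_on:
  assumes "v \<in> S" shows "ext_cls q \<phi> \<psi> (Der q \<phi> \<psi>) (rep (cls_on S v)) = cls_on UNIV v"
proof -
  obtain u where "v - u \<in> inner_vals" "rep (cls_on S v) = der_by u"
    using rep_cls_on[OF assms] by blast
  then show ?thesis
    by (simp add: Der_eq_range_der_by ext_cls_der_by[OF psi_submodule_UNIV] cls_on_eq_iff inner_vals_commute)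
qed

lemma reduce_rep_cls_on: "v \<in> S \<Longrightarrow> reduce (rep (cls_on S v) tvar) = reduce v"
  by (metis rep_cls_on der_by_t reduce_cong)

lemma ext_add_cls_on:
  assumes S: "psi_submodule S" and "v \<in> S" "w \<in> S"
  shows "ext_add q \<phi> \<psi> (der_by ` S) (cls_on S v) (cls_on S w) = cls_on S (v + w)"
proof -
  obtain u1 where u1: "u1 \<in> S" "v - u1 \<in> inner_vals" "rep (cls_on S v) = der_by u1"
    using rep_cls_on[OF assms(2)] .
  obtain u2 where u2: "u2 \<in> S" "w - u2 \<in> inner_vals" "rep (cls_on S w) = der_by u2"
    using rep_cls_on[OF assms(3)] .
  have sums: "u1 + u2 \<in> S" "v + w \<in> S" using S u1 u2 assms by (simp_all add: psi_submodule_def)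
  have "v + w - (u1 + u2) = (v - u1) + (w - u2)" by simp
  then have "v + w - (u1 + u2) \<in> inner_vals" using inner_vals_add[OF u1(2) u2(2)] by metis
  then have "cls_on S (u1 + u2) = cls_on S (v + w)" using sums cls_on_eq_iff inner_vals_commute by metis
  moreover have "(\<lambda>b. rep (cls_on S v) b + rep (cls_on S w) b) = der_by (u1 + u2)"
    using u1 u2 by (simp add: der_by_add fun_eq_iff)
  ultimately show ?thesis using ext_cls_der_by[OF S sums(1)] by (simp add: ext_add_def)
qed

lemma ext_act_cls_on:
  assumes S: "psi_submodule S" and "v \<in> S" "a \<in> Apoly q"
  shows "ext_act q \<phi> \<psi> (der_by ` S) a (cls_on S v) = cls_on S (\<psi> a \<odot> v)"
proof -
  obtain u where u: "u \<in> S" "v - u \<in> inner_vals" "rep (cls_on S v) = der_by u"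
    using rep_cls_on[OF assms(2)] .
  have prods: "\<psi> a \<odot> u \<in> S" "\<psi> a \<odot> v \<in> S" using S u assms by (simp_all add: psi_submodule_def)
  have "\<psi> a \<odot> v - \<psi> a \<odot> u = \<psi> a \<odot> (v - u)" by (simp add: tmul_diff_right)
  then have "\<psi> a \<odot> v - \<psi> a \<odot> u \<in> inner_vals" using inner_vals_psi[OF assms(3) u(2)] by simp
  then have "cls_on S (\<psi> a \<odot> u) = cls_on S (\<psi> a \<odot> v)" using prods cls_on_eq_iff inner_vals_commute by metis
  moreover have "(\<lambda>b. \<psi> a \<odot> rep (cls_on S v) b) = der_by (\<psi> a \<odot> u)"
    using u assms(3) by (simp add: der_by_psi fun_eq_iff)
  ultimately show ?thesis using ext_cls_der_by[OF S prods(1)] by (simp add: ext_act_def)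
qed

lemma Ext1_eq: "Ext1 q \<phi> \<psi> = cls_on UNIV ` UNIV"
  unfolding Ext1_def Der_eq_range_der_by by (rule quotient_der_by[OF psi_submodule_UNIV])

lemma Ext1_0_eq: "Ext1_0 q \<phi> \<psi> = cls_on const_free ` const_free"
  unfolding Ext1_0_def Der0_eq_image_der_by by (rule quotient_der_by[OF psi_submodule_const_free])

lemma ext_of_eq: "ext_of q \<phi> \<psi> w = cls_on UNIV w"
  unfolding ext_of_def der_of_eq_der_by Der_eq_range_der_by
  by (rule ext_cls_der_by[OF psi_submodule_UNIV]) simp

lemma inv_ext_of_cls_on: "inv_into (Tlt (rk \<phi>)) (ext_of q \<phi> \<psi>) (cls_on UNIV y) = reduce y"
proof (rule inv_into_f_eq)
  show "inj_on (ext_of q \<phi> \<psi>) (Tlt (rk \<phi>))"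
    by (rule inj_onI) (auto simp: ext_of_eq Tlt_def cls_on_eq_iff intro: remainder_unique)
  show "reduce y \<in> Tlt (rk \<phi>)" by (simp add: Tlt_def degree_reduce)
  show "ext_of q \<phi> \<psi> (reduce y) = cls_on UNIV y"
    using reduce_diff_inner_vals[of y] inner_vals_commute by (simp add: ext_of_eq cls_on_eq_iff)
qed

lemma trans_add_eq: "trans_add q \<phi> \<psi> v w = reduce (v + w)"
  by (simp add: trans_add_def ext_of_eq Der_eq_range_der_by ext_add_cls_on[OF psi_submodule_UNIV]
      inv_ext_of_cls_on)

lemma trans_act_eq: "a \<in> Apoly q \<Longrightarrow> trans_act q \<phi> \<psi> a w = reduce (\<psi> a \<odot> w)"
  by (simp add: trans_act_def ext_of_eq Der_eq_range_der_by ext_act_cls_on[OF psi_submodule_UNIV]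
      inv_ext_of_cls_on)

lemma reduce_const_free: "v \<in> const_free \<Longrightarrow> reduce v \<in> T1n (rk \<phi>)"
  by (simp add: T1n_def const_free_def degree_reduce coeff_0_reduce)

lemma cls_on_reduce: "v \<in> const_free \<Longrightarrow> cls_on const_free (reduce v) = cls_on const_free v"
  using reduce_diff_inner_vals[of v] inner_vals_commute
  by (simp add: cls_on_eq_iff const_free_def coeff_0_reduce)

lemma bij_betw_reduce_rep: "bij_betw (\<lambda>X. reduce (rep X tvar)) (Ext1_0 q \<phi> \<psi>) (T1n (rk \<phi>))"
  unfolding Ext1_0_eq
proof (rule bij_betw_imageI)
  let ?F = "\<lambda>X. reduce (rep X tvar)"
  show "inj_on ?F (cls_on const_free ` const_free)"
  proof (rule inj_onI, clarify)
    fix v w assume "v \<in> const_free" "w \<in> const_free"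
      and "?F (cls_on const_free v) = ?F (cls_on const_free w)"
    then show "cls_on const_free v = cls_on const_free w"
      by (simp add: reduce_rep_cls_on reduce_eq_iff cls_on_eq_iff)
  qed
  have "r \<in> ?F ` cls_on const_free ` const_free" if "r \<in> T1n (rk \<phi>)" for r
  proof -
    have "r \<in> const_free" "reduce r = r" using that by (auto simp: T1n_def const_free_def reduce_small)
    then show ?thesis using reduce_rep_cls_on by (metis image_eqI)
  qed
  then show "?F ` cls_on const_free ` const_free = T1n (rk \<phi>)"
    using reduce_rep_cls_on reduce_const_free by auto
qed

lemma Ext1_0_iso_T1n:
  "\<exists>F. bij_betw F (Ext1_0 q \<phi> \<psi>) (T1n (rk \<phi>)) \<and>
     (\<forall>X\<in>Ext1_0 q \<phi> \<psi>. \<forall>Y\<in>Ext1_0 q \<phi> \<psi>.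
        F (ext_add q \<phi> \<psi> (Der0 q \<phi> \<psi>) X Y) = trans_add q \<phi> \<psi> (F X) (F Y)) \<and>
     (\<forall>a\<in>Apoly q. \<forall>X\<in>Ext1_0 q \<phi> \<psi>.
        F (ext_act q \<phi> \<psi> (Der0 q \<phi> \<psi>) a X) = trans_act q \<phi> \<psi> a (F X))"
proof (intro exI[of _ "\<lambda>X. reduce (rep X tvar)"] conjI ballI bij_betw_reduce_rep)
  fix X Y assume "X \<in> Ext1_0 q \<phi> \<psi>" "Y \<in> Ext1_0 q \<phi> \<psi>"
  then obtain v w where "v \<in> const_free" "w \<in> const_free" "X = cls_on const_free v" "Y = cls_on const_free w"
    by (auto simp: Ext1_0_eq)
  then show "reduce (rep (ext_add q \<phi> \<psi> (Der0 q \<phi> \<psi>) X Y) tvar)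
      = trans_add q \<phi> \<psi> (reduce (rep X tvar)) (reduce (rep Y tvar))"
    by (simp add: Der0_eq_image_der_by ext_add_cls_on[OF psi_submodule_const_free] const_free_add
        reduce_rep_cls_on trans_add_eq reduce_add reduce_reduce)
next
  fix a :: "'k poly" and X assume "a \<in> Apoly q" "X \<in> Ext1_0 q \<phi> \<psi>"
  then obtain v where "a \<in> Apoly q" "v \<in> const_free" "X = cls_on const_free v" by (auto simp: Ext1_0_eq)
  then show "reduce (rep (ext_act q \<phi> \<psi> (Der0 q \<phi> \<psi>) a X) tvar)
      = trans_act q \<phi> \<psi> a (reduce (rep X tvar))"
    by (simp add: Der0_eq_image_der_by ext_act_cls_on[OF psi_submodule_const_free] const_free_psi
        reduce_rep_cls_on trans_act_eq reduce_psi)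
qed

lemma T1n_submodule:
  "T1n (rk \<phi>) \<subseteq> Tlt (rk \<phi>) \<and> 0 \<in> T1n (rk \<phi>) \<and>
   (\<forall>v\<in>T1n (rk \<phi>). \<forall>w\<in>T1n (rk \<phi>). trans_add q \<phi> \<psi> v w \<in> T1n (rk \<phi>)) \<and>
   (\<forall>a\<in>Apoly q. \<forall>w\<in>T1n (rk \<phi>). trans_act q \<phi> \<psi> a w \<in> T1n (rk \<phi>))"
  using rk_phi_pos
  by (auto simp: T1n_def Tlt_def trans_add_eq trans_act_eq degree_reduce coeff_0_reduce coeff_tmul_0)

lemma Ext1_0_submodule_Ext1:
  "let j = (\<lambda>X. ext_cls q \<phi> \<psi> (Der q \<phi> \<psi>) (rep X)) in
     j ` Ext1_0 q \<phi> \<psi> \<subseteq> Ext1 q \<phi> \<psi> \<and> inj_on j (Ext1_0 q \<phi> \<psi>) \<and>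
     (\<forall>X\<in>Ext1_0 q \<phi> \<psi>. \<forall>Y\<in>Ext1_0 q \<phi> \<psi>.
        j (ext_add q \<phi> \<psi> (Der0 q \<phi> \<psi>) X Y) = ext_add q \<phi> \<psi> (Der q \<phi> \<psi>) (j X) (j Y)) \<and>
     (\<forall>a\<in>Apoly q. \<forall>X\<in>Ext1_0 q \<phi> \<psi>.
        j (ext_act q \<phi> \<psi> (Der0 q \<phi> \<psi>) a X) = ext_act q \<phi> \<psi> (Der q \<phi> \<psi>) a (j X)) \<and>
     (\<forall>X\<in>j ` Ext1_0 q \<phi> \<psi>. \<forall>Y\<in>j ` Ext1_0 q \<phi> \<psi>.
        ext_add q \<phi> \<psi> (Der q \<phi> \<psi>) X Y \<in> j ` Ext1_0 q \<phi> \<psi>) \<and>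
     (\<forall>a\<in>Apoly q. \<forall>X\<in>j ` Ext1_0 q \<phi> \<psi>.
        ext_act q \<phi> \<psi> (Der q \<phi> \<psi>) a X \<in> j ` Ext1_0 q \<phi> \<psi>)"
proof -
  define j where "j = (\<lambda>X. ext_cls q \<phi> \<psi> (Der q \<phi> \<psi>) (rep X))"
  have j: "j (cls_on const_free v) = cls_on UNIV v" if "v \<in> const_free" for v
    unfolding j_def using ext_cls_rep_cls_on[OF that] .
  have image: "j ` Ext1_0 q \<phi> \<psi> = cls_on UNIV ` const_free"
    unfolding Ext1_0_eq using j by (auto simp: image_iff)
  have inj: "inj_on j (Ext1_0 q \<phi> \<psi>)"
    unfolding Ext1_0_eq
  proof (rule inj_onI, clarify)
    fix v w assume "v \<in> const_free" "w \<in> const_free" "j (cls_on const_free v) = j (cls_on const_free w)"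
    then show "cls_on const_free v = cls_on const_free w" by (simp add: j cls_on_eq_iff)
  qed
  show ?thesis
    unfolding Let_def j_def[symmetric] image
    using inj j const_free_add const_free_psi
    by (auto simp: Ext1_eq Ext1_0_eq Der_eq_range_der_by Der0_eq_image_der_by
        ext_add_cls_on[OF psi_submodule_UNIV] ext_add_cls_on[OF psi_submodule_const_free]
        ext_act_cls_on[OF psi_submodule_UNIV] ext_act_cls_on[OF psi_submodule_const_free])
qed

end

section \<open>Coordinates on \<open>Ext\<^sup>1\<^sub>0\<close>\<close>

context drinfeld_pair
begin

definition dim :: nat where "dim = rk \<phi> - 1"

lemma Suc_dim: "Suc dim = rk \<phi>" using rk_phi_pos by (simp add: dim_def)

definition coord_poly :: "(nat \<Rightarrow> 'k) \<Rightarrow> 'k poly" where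
  "coord_poly x = (\<Sum>i<dim. monom (x i) (Suc i))"

lemma coeff_coord_poly: "coeff (coord_poly x) k = (if 0 < k \<and> k \<le> dim then x (k - 1) else 0)"
proof (cases "0 < k \<and> k \<le> dim")
  case True
  then have "coeff (coord_poly x) k = (\<Sum>i<dim. if i = k - 1 then x (k - 1) else 0)"
    unfolding coord_poly_def coeff_sum by (intro sum.cong) auto
  moreover have "k - 1 < dim" using True by linarith
  ultimately show ?thesis using True by simp
next
  case False
  then show ?thesis by (auto simp: coord_poly_def coeff_sum intro!: sum.neutral)
qed

lemma coord_poly_const_free: "coord_poly x \<in> const_free"
  by (simp add: const_free_def coeff_coord_poly)

lemma degree_coord_poly: "degree (coord_poly x) < rk \<phi>"
  using rk_phi_pos Suc_dim by (intro degree_lessI) (auto simp: coeff_coord_poly)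

lemma coord_poly_add: "coord_poly (\<lambda>i. x i + y i) = coord_poly x + coord_poly y"
  by (simp add: coord_poly_def sum.distrib[symmetric] add_monom)

lemma coord_poly_smult: "coord_poly (\<lambda>i. c * x i) = smult c (coord_poly x)"
  by (simp add: coord_poly_def smult_sum_right smult_monom)

lemma coord_poly_0: "coord_poly (\<lambda>i. 0) = 0"
  by (simp add: coord_poly_def)

lemma coord_poly_inj_on: "inj_on coord_poly (Kvec dim)"
proof (rule inj_onI, rule ext)
  fix x y i assume xy: "x \<in> Kvec dim" "y \<in> Kvec dim" "coord_poly x = coord_poly y"
  show "x i = y i"
  proof (cases "i < dim")
    case True
    then show ?thesis using arg_cong[OF xy(3), of "\<lambda>p. coeff p (Suc i)"] by (simp add: coeff_coord_poly)
  qed (use xy in \<open>simp add: Kvec_def\<close>)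
qed

lemma coord_poly_image: "coord_poly ` Kvec dim = T1n (rk \<phi>)"
proof
  show "coord_poly ` Kvec dim \<subseteq> T1n (rk \<phi>)"
    using degree_coord_poly by (auto simp: T1n_def coeff_coord_poly)
  show "T1n (rk \<phi>) \<subseteq> coord_poly ` Kvec dim"
  proof
    fix r :: "'k poly" assume r: "r \<in> T1n (rk \<phi>)"
    define x where "x = (\<lambda>i. if i < dim then coeff r (Suc i) else 0)"
    have "coeff (coord_poly x) k = coeff r k" for k
      using r Suc_dim by (cases k) (auto simp: coeff_coord_poly x_def T1n_def coeff_eq_0)
    then have "coord_poly x = r" by (rule poly_eqI)
    moreover have "x \<in> Kvec dim" by (simp add: Kvec_def x_def)
    ultimately show "r \<in> coord_poly ` Kvec dim" by blast
  qed
qed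

definition coord_class :: "(nat \<Rightarrow> 'k) \<Rightarrow> ('k poly \<Rightarrow> 'k poly) set" where
  "coord_class x = ext_cls q \<phi> \<psi> (Der0 q \<phi> \<psi>) (der_of q \<phi> \<psi> (coord_poly x))"

lemma coord_class_eq: "coord_class x = cls_on const_free (coord_poly x)"
  unfolding coord_class_def der_of_eq_der_by Der0_eq_image_der_by
  using ext_cls_der_by[OF psi_submodule_const_free coord_poly_const_free] .

lemma coord_class_bij: "bij_betw coord_class (Kvec dim) (Ext1_0 q \<phi> \<psi>)"
proof (rule bij_betw_imageI)
  show "inj_on coord_class (Kvec dim)"
  proof (rule inj_onI)
    fix x y assume xy: "x \<in> Kvec dim" "y \<in> Kvec dim" "coord_class x = coord_class y"
    then have "coord_poly x - coord_poly y \<in> inner_vals"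
      by (simp add: coord_class_eq cls_on_eq_iff coord_poly_const_free)
    then have "coord_poly x = coord_poly y" using remainder_unique degree_coord_poly by blast
    then show "x = y" using coord_poly_inj_on xy by (auto dest: inj_onD)
  qed
  have "cls_on const_free v \<in> coord_class ` Kvec dim" if v: "v \<in> const_free" for v
  proof -
    obtain x where x: "x \<in> Kvec dim" "coord_poly x = reduce v"
      using coord_poly_image reduce_const_free[OF v] by (metis imageE)
    then show ?thesis using cls_on_reduce[OF v] by (metis coord_class_eq image_eqI)
  qed
  then show "coord_class ` Kvec dim = Ext1_0 q \<phi> \<psi>"
    by (auto simp: Ext1_0_eq coord_class_eq coord_poly_const_free)
qed

lemma coord_class_add:
  "coord_class (mw_add x y) = ext_add q \<phi> \<psi> (Der0 q \<phi> \<psi>) (coord_class x) (coord_class y)"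
  by (simp add: coord_class_eq mw_add_def coord_poly_add Der0_eq_image_der_by coord_poly_const_free
      ext_add_cls_on[OF psi_submodule_const_free])

lemma coord_class_act:
  assumes "a \<in> Apoly q" "coord_poly z = reduce (\<psi> a \<odot> coord_poly x)"
  shows "coord_class z = ext_act q \<phi> \<psi> (Der0 q \<phi> \<psi>) a (coord_class x)"
proof -
  have "cls_on const_free (coord_poly z) = cls_on const_free (\<psi> a \<odot> coord_poly x)"
    using assms(2) cls_on_reduce const_free_psi coord_poly_const_free by simp
  then show ?thesis
    using assms(1) by (simp add: coord_class_eq Der0_eq_image_der_by coord_poly_const_free
        ext_act_cls_on[OF psi_submodule_const_free])
qed

end

section \<open>Twisted polynomials depending linearly on a parameter\<close>

text \<open>A polynomial S whose coefficients are twisted polynomials stands for the family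
  \<open>c \<mapsto> \<Sum>\<^sub>k tev (coeff S k) c \<tau>\<^sup>k\<close>, which is \<open>\<bbbF>\<^sub>q\<close>-linear in \<open>c \<in> K\<close>.\<close>

context twisted_polys
begin

definition form_eval :: "'k poly poly \<Rightarrow> 'k \<Rightarrow> 'k poly" where
  "form_eval S c = map_poly (\<lambda>s. tev q s c) S"

definition form_lmul :: "'k poly \<Rightarrow> 'k poly poly \<Rightarrow> 'k poly poly" where
  "form_lmul g S = monom_double_sum (degree g) (degree S) (\<lambda>l k. monom (coeff g l) l \<odot> coeff S k)"

definition form_rmul :: "'k poly poly \<Rightarrow> 'k poly \<Rightarrow> 'k poly poly" where
  "form_rmul S h = monom_double_sum (degree S) (degree h) (\<lambda>k l. smult (coeff h l ^ (q ^ k)) (coeff S k))"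

lemma coeff_form_eval: "coeff (form_eval S c) k = tev q (coeff S k) c"
  by (simp add: form_eval_def coeff_map_poly)

lemma degree_form_eval: "degree (form_eval S c) \<le> degree S"
  by (simp add: form_eval_def map_poly_degree_leq)

lemma form_eval_diff: "form_eval (S - T) c = form_eval S c - form_eval T c"
proof -
  have "tev q (s - t) c = tev q s c - tev q t c" for s t
    using tev_add[of "s - t" t c] by simp
  then show ?thesis by (intro poly_eqI) (simp add: coeff_form_eval)
qed

lemma form_eval_monom_1: "form_eval (monom 1 n) c = monom c n"
  by (rule poly_eqI) (simp add: coeff_form_eval tev_const[of 1, unfolded one_pCons[symmetric]])

lemma tev_if: "tev q (if P then s else 0) (c::'k) = (if P then tev q s c else 0)"
  by simp

lemma form_eval_lmul: "form_eval (form_lmul g S) c = g \<odot> form_eval S c"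
proof (rule poly_eqI)
  fix k
  have "tev q (monom (coeff g l) l \<odot> s) c = coeff g l * tev q s c ^ (q ^ l)" for l s
    by (simp add: tev_tmul tev_monom)
  then show "coeff (form_eval (form_lmul g S) c) k = coeff (g \<odot> form_eval S c) k"
    by (simp add: coeff_form_eval form_lmul_def coeff_monom_double_sum tev_sum tev_if
        tmul_eq_monom_double_sum_bound[OF order.refl degree_form_eval] cong: if_cong)
qed

lemma form_eval_rmul: "form_eval (form_rmul S h) c = form_eval S c \<odot> h"
  by (rule poly_eqI)
    (simp add: coeff_form_eval form_rmul_def coeff_monom_double_sum tev_sum tev_smult tev_if
      mult.commute tmul_eq_monom_double_sum_bound[OF degree_form_eval order.refl] cong: if_cong)

lemma coeff_0_coeff_monom_double_sum:
  "coeff (coeff (monom_double_sum A B F) k) 0 = (\<Sum>i\<le>A. \<Sum>j\<le>B. if i + j = k then coeff (F i j) 0 else 0)"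
  unfolding coeff_monom_double_sum coeff_sum by (intro sum.cong refl) auto

lemma coeff_0_coeff_form_lmul: "coeff (coeff (form_lmul g S) k) 0 = coeff g 0 * coeff (coeff S k) 0"
proof -
  have "coeff (coeff (form_lmul g S) k) 0
      = (\<Sum>i\<le>degree g. if i = 0 then (\<Sum>j\<le>degree S. if j = k then coeff g 0 * coeff (coeff S j) 0 else 0) else 0)"
    unfolding form_lmul_def coeff_0_coeff_monom_double_sum
    by (intro sum.cong refl) (auto simp: coeff_tmul_0 intro!: sum.cong sum.neutral)
  then show ?thesis by (auto simp: coeff_eq_0)
qed

lemma coeff_0_coeff_form_rmul:
  "(\<And>k. coeff (coeff S k) 0 = 0) \<Longrightarrow> coeff (coeff (form_rmul S h) k) 0 = 0"
  unfolding form_rmul_def coeff_0_coeff_monom_double_sum by (simp cong: if_cong)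

end

context drinfeld_pair
begin

definition form_inner :: "'k poly poly \<Rightarrow> 'k poly poly" where
  "form_inner U = form_rmul U (\<phi> tvar) - form_lmul (\<psi> tvar) U"

lemma form_eval_inner: "form_eval (form_inner U) c \<in> inner_vals"
  by (simp add: form_inner_def form_eval_diff form_eval_rmul form_eval_lmul inner_valsI)

lemma form_inner_cancels_lead_coeff:
  assumes "rk \<phi> \<le> degree S" "coeff (lead_coeff S) 0 = 0"
  shows "\<exists>U. degree (S - form_inner U) < degree S \<and> (\<forall>k. coeff (coeff (form_inner U) k) 0 = 0)"
proof -
  define d where "d = degree S - rk \<phi>"
  define U where "U = monom (smult (1 / lead_coeff (\<phi> tvar) ^ (q ^ d)) (lead_coeff S)) d"
  have S0: "S \<noteq> 0" using assms rk_phi_pos by auto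
  then have dU: "degree U = d" using lead_coeff_phi_t_nonzero by (simp add: U_def degree_monom_eq)
  have top: "degree U + degree (\<phi> tvar) = degree S" using assms by (simp add: dU d_def rk_def)
  have above: "coeff (form_lmul (\<psi> tvar) U) k = 0" if "degree S \<le> k" for k
    unfolding form_lmul_def using that top degree_psi_t_less
    by (intro coeff_monom_double_sum_above) (simp add: rk_def)
  have "coeff (S - form_inner U) k = 0" if "degree S \<le> k" for k
  proof (cases "k = degree S")
    case True
    have "coeff (form_rmul U (\<phi> tvar)) (degree U + degree (\<phi> tvar)) = lead_coeff S"
      unfolding form_rmul_def coeff_monom_double_sum_top using lead_coeff_phi_t_nonzero
      by (simp add: dU) (simp add: U_def)
    then show ?thesis using True above top by (simp add: form_inner_def)
  next
    case False
    then have "coeff (form_rmul U (\<phi> tvar)) k = 0"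
      unfolding form_rmul_def using that top by (intro coeff_monom_double_sum_above) simp
    then show ?thesis using False that above by (simp add: form_inner_def coeff_eq_0)
  qed
  then have "degree (S - form_inner U) < degree S"
    using assms rk_phi_pos by (intro degree_lessI) auto
  moreover have "coeff (coeff U k) 0 = 0" for k using assms(2) by (simp add: U_def)
  then have "coeff (coeff (form_inner U) k) 0 = 0" for k
    by (simp add: form_inner_def coeff_0_coeff_form_rmul coeff_0_coeff_form_lmul)
  ultimately show ?thesis by blast
qed

lemma form_remainder_exists:
  "(\<And>k. rk \<phi> \<le> k \<Longrightarrow> coeff (coeff S k) 0 = 0) \<Longrightarrow>
   \<exists>R. degree R < rk \<phi> \<and> (\<forall>k. coeff (coeff R k) 0 = coeff (coeff S k) 0) \<and>
       (\<forall>c. form_eval S c - form_eval R c \<in> inner_vals)"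
proof (induction "degree S" arbitrary: S rule: less_induct)
  case less
  show ?case
  proof (cases "degree S < rk \<phi>")
    case True
    then show ?thesis using inner_vals_0 by (intro exI[of _ S]) simp
  next
    case False
    then have "coeff (lead_coeff S) 0 = 0" using less.prems by simp
    then obtain U where U: "degree (S - form_inner U) < degree S"
      "\<forall>k. coeff (coeff (form_inner U) k) 0 = 0"
      using form_inner_cancels_lead_coeff[of S] False by (auto simp: not_less)
    have "\<exists>R. degree R < rk \<phi> \<and> (\<forall>k. coeff (coeff R k) 0 = coeff (coeff S k) 0) \<and>
        (\<forall>c. form_eval (S - form_inner U) c - form_eval R c \<in> inner_vals)"
      using less.hyps[OF U(1)] less.prems U(2) by simp
    then obtain R where R: "degree R < rk \<phi>"
      "\<forall>k. coeff (coeff R k) 0 = coeff (coeff S k) 0"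
      "\<forall>c. form_eval (S - form_inner U) c - form_eval R c \<in> inner_vals"
      by blast
    have "form_eval S c - form_eval R c \<in> inner_vals" for c
    proof -
      have "form_eval S c - form_eval R c
          = (form_eval (S - form_inner U) c - form_eval R c) + form_eval (form_inner U) c"
        by (simp add: form_eval_diff)
      then show ?thesis using inner_vals_add[OF spec[OF R(3)] form_eval_inner] by metis
    qed
    then show ?thesis using R(1,2) by blast
  qed
qed

definition psi_shift_form :: "nat \<Rightarrow> 'k poly poly" where
  "psi_shift_form j = form_lmul (\<psi> tvar) (monom 1 (Suc j))"

lemma coeff_0_coeff_psi_shift_form:
  "coeff (coeff (psi_shift_form j) k) 0 = (if k = Suc j then \<theta> else 0)"
  by (simp add: psi_shift_form_def coeff_0_coeff_form_lmul coeff_0_psi_t)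

definition column_form :: "nat \<Rightarrow> 'k poly poly" where
  "column_form j = (SOME R. degree R < rk \<phi> \<and>
     (\<forall>k. coeff (coeff R k) 0 = coeff (coeff (psi_shift_form j) k) 0) \<and>
     (\<forall>c. form_eval (psi_shift_form j) c - form_eval R c \<in> inner_vals))"

lemma column_form:
  assumes "j < dim"
  shows "degree (column_form j) < rk \<phi> \<and>
     (\<forall>k. coeff (coeff (column_form j) k) 0 = coeff (coeff (psi_shift_form j) k) 0) \<and>
     (\<forall>c. form_eval (psi_shift_form j) c - form_eval (column_form j) c \<in> inner_vals)"
proof -
  have "\<exists>R. degree R < rk \<phi> \<and>
     (\<forall>k. coeff (coeff R k) 0 = coeff (coeff (psi_shift_form j) k) 0) \<and>
     (\<forall>c. form_eval (psi_shift_form j) c - form_eval R c \<in> inner_vals)"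
    by (rule form_remainder_exists) (use assms Suc_dim in \<open>simp add: coeff_0_coeff_psi_shift_form\<close>)
  then show ?thesis unfolding column_form_def by (rule someI_ex)
qed

lemma degree_column_form: "j < dim \<Longrightarrow> degree (column_form j) < rk \<phi>"
  using column_form by blast

lemma form_eval_column_form:
  assumes "j < dim" shows "form_eval (column_form j) c = reduce (\<psi> tvar \<odot> monom c (Suc j))"
proof (rule reduce_eqI[symmetric])
  show "degree (form_eval (column_form j) c) < rk \<phi>"
    by (rule le_less_trans[OF degree_form_eval degree_column_form[OF assms]])
  show "\<psi> tvar \<odot> monom c (Suc j) - form_eval (column_form j) c \<in> inner_vals"
    using column_form[OF assms] by (simp add: psi_shift_form_def form_eval_lmul form_eval_monom_1)
qed

lemma coeff_0_coeff_column_form: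
  "j < dim \<Longrightarrow> i < dim \<Longrightarrow> coeff (coeff (column_form j) (Suc i)) 0 = (if i = j then \<theta> else 0)"
  using column_form by (simp add: coeff_0_coeff_psi_shift_form)

end

section \<open>The t-module \<open>\<Pi>\<^sup>0\<close>\<close>

context drinfeld_pair
begin

text \<open>Column j of \<open>\<Pi>\<^sup>0\<^sub>t\<close> lists the coefficients of \<open>\<tau>, \<dots>, \<tau>\<^bsup>n-1\<^esup>\<close> in the remainder
  of \<open>\<psi>\<^sub>t c \<tau>\<^bsup>j+1\<^esup>\<close>, as twisted polynomials in c.\<close>

definition Pi0_t :: "nat \<Rightarrow> nat \<Rightarrow> 'k poly" where
  "Pi0_t i j = (if i < dim \<and> j < dim then coeff (column_form j) (Suc i) else 0)"

definition mat_act :: "(nat \<Rightarrow> nat \<Rightarrow> 'k poly) \<Rightarrow> (nat \<Rightarrow> 'k) \<Rightarrow> nat \<Rightarrow> 'k" where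
  "mat_act M x = (\<lambda>i. if i < dim then (\<Sum>j<dim. tev q (M i j) (x j)) else 0)"

lemma mw_act_eq_mat_act: "mw_act q dim \<Phi> a x = mat_act (\<Phi> a) x"
  unfolding mw_act_def mat_act_def ..

lemma coord_poly_column:
  assumes "j < dim"
  shows "coord_poly (\<lambda>i. tev q (coeff (column_form j) (Suc i)) c) = form_eval (column_form j) c"
proof (rule poly_eqI)
  fix k
  have "coeff (form_eval (column_form j) c) 0 = 0"
    using form_eval_column_form[OF assms] by (simp add: coeff_0_reduce coeff_tmul_0)
  moreover have "coeff (form_eval (column_form j) c) k = 0" if "rk \<phi> \<le> k"
    using that degree_column_form[OF assms] by (simp add: coeff_form_eval coeff_eq_0)
  ultimately show "coeff (coord_poly (\<lambda>i. tev q (coeff (column_form j) (Suc i)) c)) k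
      = coeff (form_eval (column_form j) c) k"
    using Suc_dim by (cases k) (auto simp: coeff_coord_poly coeff_form_eval)
qed

lemma coord_poly_mat_act_Pi0_t: "coord_poly (mat_act Pi0_t x) = reduce (\<psi> tvar \<odot> coord_poly x)"
proof -
  have "coord_poly (mat_act Pi0_t x) = (\<Sum>i<dim. \<Sum>j<dim. monom (tev q (Pi0_t i j) (x j)) (Suc i))"
    by (simp add: coord_poly_def mat_act_def monom_sum)
  also have "\<dots> = (\<Sum>j<dim. \<Sum>i<dim. monom (tev q (coeff (column_form j) (Suc i)) (x j)) (Suc i))"
    by (subst sum.swap) (simp add: Pi0_t_def)
  also have "\<dots> = (\<Sum>j<dim. reduce (\<psi> tvar \<odot> monom (x j) (Suc j)))"
    by (intro sum.cong refl)
      (simp add: coord_poly_column[symmetric] form_eval_column_form[symmetric] coord_poly_def)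
  also have "\<dots> = reduce (\<psi> tvar \<odot> coord_poly x)"
    by (simp add: reduce_sum tmul_sum_right coord_poly_def)
  finally show ?thesis .
qed

definition mat_zero :: "nat \<Rightarrow> nat \<Rightarrow> 'k poly" where
  "mat_zero = (\<lambda>i j. 0)"

definition mat_scalar :: "'k \<Rightarrow> nat \<Rightarrow> nat \<Rightarrow> 'k poly" where
  "mat_scalar c = (\<lambda>i j. if i = j \<and> i < dim then [:c:] else 0)"

definition mat_add :: "(nat \<Rightarrow> nat \<Rightarrow> 'k poly) \<Rightarrow> (nat \<Rightarrow> nat \<Rightarrow> 'k poly) \<Rightarrow> nat \<Rightarrow> nat \<Rightarrow> 'k poly" where
  "mat_add M N = (\<lambda>i j. M i j + N i j)"

definition mat_smult :: "'k \<Rightarrow> (nat \<Rightarrow> nat \<Rightarrow> 'k poly) \<Rightarrow> nat \<Rightarrow> nat \<Rightarrow> 'k poly" where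
  "mat_smult c M = (\<lambda>i j. smult c (M i j))"

abbreviation mat_mul :: "(nat \<Rightarrow> nat \<Rightarrow> 'k poly) \<Rightarrow> (nat \<Rightarrow> nat \<Rightarrow> 'k poly) \<Rightarrow> nat \<Rightarrow> nat \<Rightarrow> 'k poly" where
  "mat_mul \<equiv> tmat_mul q dim"

lemma mat_mul_zero_left: "mat_mul mat_zero M = mat_zero"
  by (simp add: tmat_mul_def mat_zero_def)

lemma mat_mul_zero_right: "mat_mul M mat_zero = mat_zero"
  by (simp add: tmat_mul_def mat_zero_def)

lemma mat_mul_add_left: "mat_mul (mat_add M N) L = mat_add (mat_mul M L) (mat_mul N L)"
  by (simp add: tmat_mul_def mat_add_def tmul_add_left sum.distrib)

lemma mat_mul_add_right: "mat_mul M (mat_add N L) = mat_add (mat_mul M N) (mat_mul M L)"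
  by (simp add: tmat_mul_def mat_add_def tmul_add_right sum.distrib)

lemma mat_mul_assoc: "mat_mul (mat_mul A B) C = mat_mul A (mat_mul B C)"
proof (intro ext)
  fix i j
  have "mat_mul (mat_mul A B) C i j = (\<Sum>k<dim. \<Sum>l<dim. A i l \<odot> (B l k \<odot> C k j))"
    by (simp add: tmat_mul_def tmul_sum_left tmul_assoc)
  also have "\<dots> = mat_mul A (mat_mul B C) i j"
    by (subst sum.swap) (simp add: tmat_mul_def tmul_sum_right)
  finally show "mat_mul (mat_mul A B) C i j = mat_mul A (mat_mul B C) i j" .
qed

lemma mat_mul_scalar_left: assumes "is_tmat dim M" shows "mat_mul (mat_scalar c) M = mat_smult c M"
proof (intro ext)
  fix i j
  show "mat_mul (mat_scalar c) M i j = mat_smult c M i j"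
  proof (cases "i < dim")
    case True
    then have "mat_mul (mat_scalar c) M i j = (\<Sum>k<dim. if k = i then [:c:] \<odot> M i j else 0)"
      unfolding tmat_mul_def by (intro sum.cong refl) (auto simp: mat_scalar_def)
    then show ?thesis using True by (simp add: tmul_const_left mat_smult_def)
  qed (use assms in \<open>simp add: tmat_mul_def mat_scalar_def mat_smult_def is_tmat_def\<close>)
qed

lemma mat_mul_scalar_1_right: assumes "is_tmat dim M" shows "mat_mul M (mat_scalar 1) = M"
proof (intro ext)
  fix i j
  show "mat_mul M (mat_scalar 1) i j = M i j"
  proof (cases "j < dim")
    case True
    then have "mat_mul M (mat_scalar 1) i j = (\<Sum>k<dim. if k = j then M i j \<odot> [:1:] else 0)"
      unfolding tmat_mul_def by (intro sum.cong refl) (auto simp: mat_scalar_def)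
    then show ?thesis using True tmul_const_right[OF Fq_1] by simp
  qed (use assms in \<open>simp add: tmat_mul_def mat_scalar_def is_tmat_def\<close>)
qed

lemma mat_mul_smult_right: "c \<in> Fq q \<Longrightarrow> mat_mul M (mat_smult c N) = mat_smult c (mat_mul M N)"
  by (simp add: tmat_mul_def mat_smult_def tmul_smult_right smult_sum_right)

lemma is_tmat_zero: "is_tmat dim mat_zero" by (simp add: is_tmat_def mat_zero_def)
lemma is_tmat_scalar: "is_tmat dim (mat_scalar c)" by (simp add: is_tmat_def mat_scalar_def)
lemma is_tmat_add: "is_tmat dim M \<Longrightarrow> is_tmat dim N \<Longrightarrow> is_tmat dim (mat_add M N)"
  by (simp add: is_tmat_def mat_add_def)
lemma is_tmat_mul: "is_tmat dim M \<Longrightarrow> is_tmat dim N \<Longrightarrow> is_tmat dim (mat_mul M N)"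
  by (auto simp: is_tmat_def tmat_mul_def)
lemma is_tmat_Pi0_t: "is_tmat dim Pi0_t" by (simp add: is_tmat_def Pi0_t_def)

lemma mat_scalar_add: "mat_scalar (c + e) = mat_add (mat_scalar c) (mat_scalar e)"
  by (auto simp: fun_eq_iff mat_scalar_def mat_add_def)
lemma mat_scalar_mult: "mat_scalar (c * e) = mat_smult c (mat_scalar e)"
  by (auto simp: fun_eq_iff mat_scalar_def mat_smult_def)
lemma mat_scalar_0: "mat_scalar 0 = mat_zero"
  by (auto simp: fun_eq_iff mat_scalar_def mat_zero_def)
lemma mat_smult_add: "mat_smult c (mat_add M N) = mat_add (mat_smult c M) (mat_smult c N)"
  by (simp add: mat_smult_def mat_add_def smult_add_right)
lemma mat_add_zero_left: "mat_add mat_zero M = M"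
  by (simp add: mat_add_def mat_zero_def)
lemma mat_add_zero_right: "mat_add M mat_zero = M"
  by (simp add: mat_add_def mat_zero_def)
lemma mat_add_assoc: "mat_add (mat_add A B) C = mat_add A (mat_add B C)"
  by (simp add: mat_add_def add.assoc)
lemma mat_add_left_commute: "mat_add A (mat_add B C) = mat_add B (mat_add A C)"
  by (simp add: mat_add_def add.left_commute)

definition Pi0 :: "'k poly \<Rightarrow> nat \<Rightarrow> nat \<Rightarrow> 'k poly" where
  "Pi0 a = foldr (\<lambda>c M. mat_add (mat_scalar c) (mat_mul Pi0_t M)) (coeffs a) mat_zero"

lemma Pi0_0: "Pi0 0 = mat_zero" by (simp add: Pi0_def)

lemma Pi0_pCons: "Pi0 (pCons c a) = mat_add (mat_scalar c) (mat_mul Pi0_t (Pi0 a))"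
proof (cases "c = 0 \<and> a = 0")
  case False
  then have "coeffs (pCons c a) = c # coeffs a" by (auto simp: cCons_def)
  then show ?thesis by (simp add: Pi0_def)
qed (simp add: Pi0_0 mat_scalar_0 mat_mul_zero_right mat_add_zero_left)

lemma Pi0_const: "Pi0 [:c:] = mat_scalar c"
  by (simp add: Pi0_pCons Pi0_0 mat_mul_zero_right mat_add_zero_right)

lemma is_tmat_Pi0: "is_tmat dim (Pi0 a)"
  by (induction a) (simp_all add: Pi0_0 is_tmat_zero Pi0_pCons is_tmat_add is_tmat_scalar is_tmat_mul is_tmat_Pi0_t)

lemma Pi0_add: "Pi0 (a + b) = mat_add (Pi0 a) (Pi0 b)"
proof (induction a arbitrary: b)
  case (pCons c a)
  obtain e b' where b: "b = pCons e b'" by (cases b) auto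
  show ?case using pCons.IH
    by (simp add: b Pi0_pCons mat_scalar_add mat_mul_add_right mat_add_assoc mat_add_left_commute)
qed (simp add: Pi0_0 mat_add_zero_left)

lemma Pi0_smult: "c \<in> Fq q \<Longrightarrow> Pi0 (smult c a) = mat_smult c (Pi0 a)"
proof (induction a)
  case (pCons e a)
  then show ?case by (simp add: Pi0_pCons mat_scalar_mult mat_smult_add mat_mul_smult_right)
qed (simp add: Pi0_0 mat_smult_def mat_zero_def)

lemma Pi0_mult: "a \<in> Apoly q \<Longrightarrow> Pi0 (a * b) = mat_mul (Pi0 a) (Pi0 b)"
proof (induction a rule: Apoly_induct)
  case (pCons c a)
  have "Pi0 (pCons c a * b) = Pi0 (smult c b + pCons 0 (a * b))" by simp
  also have "\<dots> = mat_add (mat_smult c (Pi0 b)) (mat_add (mat_scalar 0) (mat_mul Pi0_t (mat_mul (Pi0 a) (Pi0 b))))"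
    using pCons by (simp add: Pi0_add Pi0_smult Pi0_pCons)
  also have "\<dots> = mat_mul (Pi0 (pCons c a)) (Pi0 b)"
    by (simp add: Pi0_pCons mat_mul_add_left mat_mul_scalar_left[OF is_tmat_Pi0] mat_mul_assoc
        mat_scalar_0 mat_add_zero_left)
  finally show ?case .
qed (simp add: Pi0_0 mat_mul_zero_left)

lemma Pi0_1: "Pi0 1 = tmat_one dim"
  using Pi0_const[of 1] by (auto simp: fun_eq_iff mat_scalar_def tmat_one_def one_pCons)

lemma Pi0_tvar: "Pi0 tvar = Pi0_t"
  using Pi0_pCons[of 0 "[:1:]"]
  by (simp add: Pi0_const mat_mul_scalar_1_right[OF is_tmat_Pi0_t] mat_scalar_0 mat_add_zero_left)

text \<open>The constant term of \<open>\<Pi>\<^sup>0\<^sub>t\<close> is exactly \<open>\<theta> I\<close>, so the nilpotent part is zero.\<close>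

lemma Pi0_nilpotent:
  "nilpotent_kmat dim (\<lambda>i j. coeff (Pi0 tvar i j) 0 - (if i = j then \<theta> else 0))"
  unfolding nilpotent_kmat_def
  by (intro exI[of _ 1] allI impI)
    (simp add: kmat_mul_def Pi0_tvar Pi0_t_def coeff_0_coeff_column_form)

lemma t_module_Pi0: "t_module q \<theta> dim Pi0"
  unfolding t_module_def
  by (simp add: is_tmat_Pi0 Pi0_1 Pi0_add[unfolded mat_add_def] Pi0_mult
      Pi0_smult[unfolded mat_smult_def] Pi0_nilpotent)

lemma mat_act_zero: "mat_act mat_zero x = (\<lambda>i. 0)"
  by (simp add: mat_act_def mat_zero_def cong: if_cong)

lemma mat_act_add: "mat_act (mat_add M N) x = (\<lambda>i. mat_act M x i + mat_act N x i)"
  by (auto simp: mat_act_def mat_add_def tev_add sum.distrib)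

lemma mat_act_scalar: assumes "x \<in> Kvec dim" shows "mat_act (mat_scalar c) x = (\<lambda>i. c * x i)"
proof
  fix i
  have "(\<Sum>j<dim. tev q (mat_scalar c i j) (x j)) = (\<Sum>j<dim. if j = i then c * x i else 0)"
    by (intro sum.cong refl) (auto simp: mat_scalar_def tev_const)
  then show "mat_act (mat_scalar c) x i = c * x i"
    using assms by (simp add: mat_act_def Kvec_def)
qed

lemma mat_act_mul: "mat_act (mat_mul M N) x = mat_act M (mat_act N x)"
proof
  fix i
  have "(\<Sum>j<dim. \<Sum>k<dim. tev q (M i k) (tev q (N k j) (x j)))
      = (\<Sum>k<dim. \<Sum>j<dim. tev q (M i k) (tev q (N k j) (x j)))"
    by (rule sum.swap)
  then show "mat_act (mat_mul M N) x i = mat_act M (mat_act N x) i"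
    by (simp add: mat_act_def tmat_mul_def tev_sum tev_tmul tev_sum_arg)
qed

lemma coord_poly_mat_act_Pi0:
  "a \<in> Apoly q \<Longrightarrow> x \<in> Kvec dim \<Longrightarrow> coord_poly (mat_act (Pi0 a) x) = reduce (\<psi> a \<odot> coord_poly x)"
proof (induction a arbitrary: x rule: Apoly_induct)
  case (pCons c a)
  have "coord_poly (mat_act (Pi0 (pCons c a)) x)
      = smult c (coord_poly x) + coord_poly (mat_act Pi0_t (mat_act (Pi0 a) x))"
    using pCons.prems by (simp add: Pi0_pCons mat_act_add mat_act_scalar mat_act_mul coord_poly_add coord_poly_smult)
  also have "\<dots> = reduce (smult c (coord_poly x)) + reduce (\<psi> tvar \<odot> reduce (\<psi> a \<odot> coord_poly x))"
    using pCons degree_coord_poly[of x] degree_smult_le[of c "coord_poly x"]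
    by (simp add: coord_poly_mat_act_Pi0_t reduce_small)
  also have "\<dots> = reduce (\<psi> (pCons c a) \<odot> coord_poly x)"
    using pCons by (simp add: reduce_psi[OF Apoly_t] reduce_add[symmetric] psi_pCons tmul_add_left
        tmul_const_left tmul_assoc)
  finally show ?case .
qed (simp add: Pi0_0 mat_act_zero coord_poly_0 psi_0 reduce_0)

lemma Ext1_0_t_module:
  "\<exists>Pi0. t_module q \<theta> (rk \<phi> - 1) Pi0 \<and>
     (let E = (\<lambda>x. ext_cls q \<phi> \<psi> (Der0 q \<phi> \<psi>) (der_of q \<phi> \<psi> (\<Sum>i<rk \<phi> - 1. monom (x i) (Suc i)))) in
        bij_betw E (Kvec (rk \<phi> - 1)) (Ext1_0 q \<phi> \<psi>) \<and>
        (\<forall>x\<in>Kvec (rk \<phi> - 1). \<forall>y\<in>Kvec (rk \<phi> - 1).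
           E (mw_add x y) = ext_add q \<phi> \<psi> (Der0 q \<phi> \<psi>) (E x) (E y)) \<and>
        (\<forall>a\<in>Apoly q. \<forall>x\<in>Kvec (rk \<phi> - 1).
           E (mw_act q (rk \<phi> - 1) Pi0 a x) = ext_act q \<phi> \<psi> (Der0 q \<phi> \<psi>) a (E x)))"
  unfolding dim_def[symmetric] coord_poly_def[symmetric] coord_class_def[symmetric] Let_def
  using t_module_Pi0 coord_class_bij coord_class_add coord_class_act coord_poly_mat_act_Pi0
  by (auto simp: mw_act_eq_mat_act)

end

theorem lemma5p2:
  fixes \<phi> \<psi> :: "'k::field poly \<Rightarrow> 'k poly" and \<theta> :: 'k and p q m n :: nat
  assumes "prime p" and "CHAR('k) = p" and "m > 0" and "q = p ^ m"
    and "card (Fq q :: 'k set) = q"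
    and "drinfeld_module q \<theta> \<phi>" and "drinfeld_module q \<theta> \<psi>"
    and "rk \<phi> > rk \<psi>" and "n = rk \<phi>"
  shows
    \<comment> \<open>(i) Ext^1_{0,tau} is isomorphic to K{tau}_{<1,n)} as F_q[t]-module\<close>
    "(\<exists>F. bij_betw F (Ext1_0 q \<phi> \<psi>) (T1n n) \<and>
        (\<forall>X\<in>Ext1_0 q \<phi> \<psi>. \<forall>Y\<in>Ext1_0 q \<phi> \<psi>.
           F (ext_add q \<phi> \<psi> (Der0 q \<phi> \<psi>) X Y) = trans_add q \<phi> \<psi> (F X) (F Y)) \<and>
        (\<forall>a\<in>Apoly q. \<forall>X\<in>Ext1_0 q \<phi> \<psi>.
           F (ext_act q \<phi> \<psi> (Der0 q \<phi> \<psi>) a X) = trans_act q \<phi> \<psi> a (F X)))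
     \<and>
    \<comment> \<open>(ii) K{tau}_{<1,n)} is a submodule of K{tau}_{<n}\<close>
     (T1n n \<subseteq> Tlt n \<and> 0 \<in> T1n n \<and>
      (\<forall>v\<in>T1n n. \<forall>w\<in>T1n n. trans_add q \<phi> \<psi> v w \<in> T1n n) \<and>
      (\<forall>a\<in>Apoly q. \<forall>w\<in>T1n n. trans_act q \<phi> \<psi> a w \<in> T1n n))
     \<and>
    \<comment> \<open>(iii) the natural map Ext^1_{0,tau} \<rightarrow> Ext^1_tau, [\<delta>] \<mapsto> [\<delta>], is an injective module map
        whose image is a submodule\<close>
     (let j = (\<lambda>X. ext_cls q \<phi> \<psi> (Der q \<phi> \<psi>) (rep X)) in
        j ` Ext1_0 q \<phi> \<psi> \<subseteq> Ext1 q \<phi> \<psi> \<and> inj_on j (Ext1_0 q \<phi> \<psi>) \<and>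
        (\<forall>X\<in>Ext1_0 q \<phi> \<psi>. \<forall>Y\<in>Ext1_0 q \<phi> \<psi>.
           j (ext_add q \<phi> \<psi> (Der0 q \<phi> \<psi>) X Y) = ext_add q \<phi> \<psi> (Der q \<phi> \<psi>) (j X) (j Y)) \<and>
        (\<forall>a\<in>Apoly q. \<forall>X\<in>Ext1_0 q \<phi> \<psi>.
           j (ext_act q \<phi> \<psi> (Der0 q \<phi> \<psi>) a X) = ext_act q \<phi> \<psi> (Der q \<phi> \<psi>) a (j X)) \<and>
        (\<forall>X\<in>j ` Ext1_0 q \<phi> \<psi>. \<forall>Y\<in>j ` Ext1_0 q \<phi> \<psi>.
           ext_add q \<phi> \<psi> (Der q \<phi> \<psi>) X Y \<in> j ` Ext1_0 q \<phi> \<psi>) \<and>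
        (\<forall>a\<in>Apoly q. \<forall>X\<in>j ` Ext1_0 q \<phi> \<psi>.
           ext_act q \<phi> \<psi> (Der q \<phi> \<psi>) a X \<in> j ` Ext1_0 q \<phi> \<psi>))
     \<and>
    \<comment> \<open>(iv) a t-module Pi^0 of dimension n-1 whose Mordell-Weil module is isomorphic to
        Ext^1_{0,tau} via (c_1,...,c_{n-1}) \<mapsto> [\<delta>], \<delta>(t) = sum c_i tau^i
        (vector entry x i is the coordinate c_{i+1})\<close>
     (\<exists>Pi0. t_module q \<theta> (n - 1) Pi0 \<and>
        (let E = (\<lambda>x. ext_cls q \<phi> \<psi> (Der0 q \<phi> \<psi>)
                     (der_of q \<phi> \<psi> (\<Sum>i<n - 1. monom (x i) (Suc i)))) in
          bij_betw E (Kvec (n - 1)) (Ext1_0 q \<phi> \<psi>) \<and>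
          (\<forall>x\<in>Kvec (n - 1). \<forall>y\<in>Kvec (n - 1).
             E (mw_add x y) = ext_add q \<phi> \<psi> (Der0 q \<phi> \<psi>) (E x) (E y)) \<and>
          (\<forall>a\<in>Apoly q. \<forall>x\<in>Kvec (n - 1).
             E (mw_act q (n - 1) Pi0 a x) = ext_act q \<phi> \<psi> (Der0 q \<phi> \<psi>) a (E x))))"
proof -
  interpret drinfeld_pair q m \<theta> \<phi> \<psi>
    using assms by unfold_locales auto
  show ?thesis
    unfolding assms(9)
    using Ext1_0_iso_T1n T1n_submodule Ext1_0_submodule_Ext1 Ext1_0_t_module by blast
qed

end
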